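(* Let $n\in\mathbb{N}$, $\hbar\in{]0,\infty[}$, $k\in\mathbb{N}$ and $f\in\mathscr{P}^{k,0}(\mathbb{C}^{1+n})$. Then $f\overline{f}\in(\mathcal{B}_\hbar)^{++}_{\mathrm H}+(\langle\mathcal{J}-\hbar(k-1)\rangle)_{\mathrm H}$, where $f\overline{f}$ is the pointwise product.
   Context: $\mathscr{P}^{k,\ell}(\mathbb{C}^{1+n})$ is the span of $z^K\overline{z}^L$ ($|K|=k$, $|L|=\ell$); $\mathscr{P}^{k,0}$ consists of $k$-homogeneous holomorphic polynomials. Wick product: $f\star_\hbar g=\sum_K\frac{\hbar^{|K|}}{K!}\frac{\partial^{|K|}f}{\partial\overline{z}^K}\frac{\partial^{|K|}g}{\partial z^K}$, involution pointwise conjugation. $\mathcal{B}_\hbar=\bigoplus_m\mathscr{P}^{m,m}(\mathbb{C}^{1+n})$ with $\star_\hbar$; $(\mathcal{B}_\hbar)^{++}_{\mathrm H}$ = finite sums $\sum\overline{g_j}\star_\hbar g_j$, $g_j\in\mathcal{B}_\hbar$. $\mathcal{J}=\sum_jz_j\overline{z_j}$; $\langle\mathcal{J}-\nu\rangle$ is the $^*$-ideal of $\mathcal{B}_\hbar$ generated by $\mathcal{J}-\nu\mathbb{1}$; $(\cdot)_{\mathrm H}$ denotes Hermitian (real-valued) elements. *)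

theory Defs
  imports Complex_Main
begin

text \<open>The 1+n coordinates are indexed by an
  arbitrary (nonempty) finite type 'i. A polynomial sum c_(K,L) z^K zbar^L is represented
  by its coefficient function on pairs of multi-indices (K,L).\<close>

type_synonym 'i mon = "('i \<Rightarrow> nat) \<times> ('i \<Rightarrow> nat)"
type_synonym 'i cpoly = "'i mon \<Rightarrow> complex"

definition supp :: "'i cpoly \<Rightarrow> 'i mon set" where
  "supp p = {m. p m \<noteq> 0}"

definition mdeg :: "('i::finite \<Rightarrow> nat) \<Rightarrow> nat" where
  "mdeg K = (\<Sum>i\<in>UNIV. K i)"

definition mfact :: "('i::finite \<Rightarrow> nat) \<Rightarrow> nat" where
  "mfact K = (\<Prod>i\<in>UNIV. fact (K i))"

definition Pkl :: "nat \<Rightarrow> nat \<Rightarrow> ('i::finite) cpoly set" where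
  "Pkl k l = {p. finite (supp p) \<and> (\<forall>K L. p (K, L) \<noteq> 0 \<longrightarrow> mdeg K = k \<and> mdeg L = l)}"

text \<open>The carrier of B_hbar: direct sum of the P^{m,m}.\<close>
definition Bset :: "('i::finite) cpoly set" where
  "Bset = {p. finite (supp p) \<and> (\<forall>K L. p (K, L) \<noteq> 0 \<longrightarrow> mdeg K = mdeg L)}"

definition pmult :: "('i::finite) cpoly \<Rightarrow> 'i cpoly \<Rightarrow> 'i cpoly" where
  "pmult p q = (\<lambda>(P, Q). \<Sum>a\<in>supp p. \<Sum>b\<in>supp q.
      if (\<lambda>i. fst a i + fst b i) = P \<and> (\<lambda>i. snd a i + snd b i) = Q
      then p a * q b else 0)"

text \<open>Involution: pointwise complex conjugation of the function,
  i.e. conj(sum c z^K zbar^L) = sum conj(c) z^L zbar^K.\<close>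
definition cstar :: "('i::finite) cpoly \<Rightarrow> 'i cpoly" where
  "cstar p = (\<lambda>(K, L). cnj (p (L, K)))"

text \<open>Wick product f *_h g = sum_M h^|M|/M! (d^M f / d zbar^M) (d^M g / d z^M), computed on
  monomials: d^M/d zbar^M (z^A zbar^B) = prod_i B_i!/(B_i-M_i)! z^A zbar^(B-M) for M <= B.\<close>
definition wick :: "real \<Rightarrow> ('i::finite) cpoly \<Rightarrow> 'i cpoly \<Rightarrow> 'i cpoly" where
  "wick h p q = (\<lambda>(P, Q). \<Sum>a\<in>supp p. \<Sum>b\<in>supp q.
      \<Sum>M\<in>{M. \<forall>i. M i \<le> snd a i \<and> M i \<le> fst b i}.
        if (\<lambda>i. fst a i + fst b i - M i) = P \<and> (\<lambda>i. snd a i - M i + snd b i) = Q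
        then complex_of_real (h ^ mdeg M) / of_nat (mfact M)
             * (\<Prod>i\<in>UNIV. of_nat (fact (snd a i)) / of_nat (fact (snd a i - M i)))
             * (\<Prod>i\<in>UNIV. of_nat (fact (fst b i)) / of_nat (fact (fst b i - M i)))
             * p a * q b
        else 0)"

definition one_poly :: "('i::finite) cpoly" where
  "one_poly = (\<lambda>m. if m = ((\<lambda>_. 0), (\<lambda>_. 0)) then 1 else 0)"

definition Jpoly :: "('i::finite) cpoly" where
  "Jpoly = (\<lambda>(K, L). if K = L \<and> mdeg K = 1 then 1 else 0)"

inductive_set pos_cone :: "real \<Rightarrow> ('i::finite) cpoly set" for h where
  pc_zero: "(\<lambda>_. 0) \<in> pos_cone h"
| pc_step: "p \<in> pos_cone h \<Longrightarrow> g \<in> Bset \<Longrightarrow> (\<lambda>m. p m + wick h (cstar g) g m) \<in> pos_cone h"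

inductive_set star_ideal :: "real \<Rightarrow> ('i::finite) cpoly \<Rightarrow> 'i cpoly set" for h x where
  si_gen: "x \<in> star_ideal h x"
| si_add: "a \<in> star_ideal h x \<Longrightarrow> b \<in> star_ideal h x \<Longrightarrow> (\<lambda>m. a m + b m) \<in> star_ideal h x"
| si_left: "c \<in> Bset \<Longrightarrow> a \<in> star_ideal h x \<Longrightarrow> wick h c a \<in> star_ideal h x"
| si_right: "c \<in> Bset \<Longrightarrow> a \<in> star_ideal h x \<Longrightarrow> wick h a c \<in> star_ideal h x"
| si_star: "a \<in> star_ideal h x \<Longrightarrow> cstar a \<in> star_ideal h x"

definition herm :: "('i::finite) cpoly set \<Rightarrow> 'i cpoly set" where
  "herm S = {p \<in> S. cstar p = p}"

end

theory Submission
  imports Defs "HOL-Computational_Algebra.Formal_Power_Series"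
begin

(*
  For a polynomial W in the products z_i zbar_i write f conj(f) W for the pointwise product.
  The Wick square of r z^L conj(f) is of this form, and choosing r^2 = 1/(c L!) and summing over
  |L| = k gives f conj(f) G(|z|^2) with G(t) = \<Sum>j\<le>k. g_j t^j / j!, g_j = h^(k-j) C(k+n, k-j) / c.
  Because f is homogeneous of degree k, (J - h(k-1)) \<star> (f conj(f) V) = f conj(f) (|z|^2 V + h (1 + E) V)
  with E the Euler operator. Hence f conj(f) = f conj(f) G + (J - h(k-1)) \<star> (f conj(f) V) as soon as
  |z|^2 V + h (1 + E) V = 1 - G. For V = \<Sum>j v_j |z|^(2j) / j! this is the recursion
  j v_(j-1) + h (j+1) v_j = [j = 0] - g_j, whose solution is a polynomial iff \<Sum>j\<le>k. (-h)^j g_j = 1;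
  this fixes c = h^k C(k+n-1, k), which is positive once n \<ge> 1 or k = 0.
  With a single variable and k \<ge> 1, f conj(f) lies in the ideal itself.
*)

section \<open>Multi-indices\<close>

lemma mdeg_add: "mdeg (\<lambda>i. A i + B i) = mdeg A + mdeg B"
  by (simp add: mdeg_def sum.distrib)

lemma mdeg_mono: "(\<And>i. N i \<le> L i) \<Longrightarrow> mdeg N \<le> mdeg L"
  unfolding mdeg_def by (intro sum_mono)

lemma mdeg_diff:
  assumes "\<And>i. N i \<le> L i"
  shows "mdeg (\<lambda>i. L i - N i) = mdeg L - mdeg N"
proof -
  have "L = (\<lambda>i. N i + (L i - N i))" using assms by (intro ext) simp
  then have "mdeg L = mdeg N + mdeg (\<lambda>i. L i - N i)" by (metis mdeg_add)
  then show ?thesis by simp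
qed

lemma mdeg_eq_0_iff: "mdeg (K::'i::finite \<Rightarrow> nat) = 0 \<longleftrightarrow> K = (\<lambda>_. 0)"
  by (auto simp: mdeg_def fun_eq_iff)

lemma finite_mdeg_le: "finite {N::'i::finite \<Rightarrow> nat. mdeg N \<le> d}"
proof (rule finite_subset)
  show "{N::'i \<Rightarrow> nat. mdeg N \<le> d} \<subseteq> {N. \<forall>x. (x \<in> UNIV \<longrightarrow> N x \<in> {..d}) \<and> (x \<notin> UNIV \<longrightarrow> N x = 0)}"
  proof clarsimp
    fix N :: "'i \<Rightarrow> nat" and x assume "mdeg N \<le> d"
    moreover have "N x \<le> mdeg N" unfolding mdeg_def by (rule member_le_sum) auto
    ultimately show "N x \<le> d" by simp
  qed
  show "finite {N::'i \<Rightarrow> nat. \<forall>x. (x \<in> UNIV \<longrightarrow> N x \<in> {..d}) \<and> (x \<notin> UNIV \<longrightarrow> N x = 0)}"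
    by (rule finite_set_of_finite_funs) auto
qed

lemma mfact_pos: "0 < mfact (N::'i::finite \<Rightarrow> nat)"
  unfolding mfact_def by (rule prod_pos) simp

lemma mfact_eq_mult_binomial:
  assumes "\<And>i. N i \<le> L i"
  shows "real (mfact L) = real (mfact N) * real (mfact (\<lambda>i. L i - N i)) * (\<Prod>i\<in>UNIV. real (L i choose N i))"
proof -
  have "real (fact (L i)) = real (fact (N i)) * real (fact (L i - N i)) * real (L i choose N i)" for i
    using binomial_fact_lemma[OF assms[of i]] by (metis of_nat_mult)
  then show ?thesis by (simp add: mfact_def of_nat_prod prod.distrib)
qed

definition unit_idx :: "'i \<Rightarrow> 'i \<Rightarrow> nat" where
  "unit_idx l = (\<lambda>i. if i = l then 1 else 0)"

lemma mdeg_unit_idx [simp]: "mdeg (unit_idx (l::'i::finite)) = 1"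
  by (simp add: mdeg_def unit_idx_def)

lemma mdeg_zero [simp]: "mdeg (\<lambda>_::'i::finite. 0) = 0"
  by (simp add: mdeg_def)

lemma mfact_zero [simp]: "mfact (\<lambda>_::'i::finite. 0) = 1"
  by (simp add: mfact_def)

lemma mfact_unit_idx [simp]: "mfact (unit_idx (l::'i::finite)) = 1"
  unfolding mfact_def unit_idx_def by (rule prod.neutral) simp

lemma fact_unit_idx [simp]: "fact (unit_idx l i) = (1::'a::semiring_char_0)"
  by (simp add: unit_idx_def)

lemma unit_idx_neq_zero: "unit_idx l \<noteq> (\<lambda>_. 0)"
  by (auto simp: unit_idx_def fun_eq_iff)

lemma inj_unit_idx: "inj unit_idx"
  by (auto simp: inj_def unit_idx_def fun_eq_iff split: if_splits)

lemma mdeg_eq_1_imp_unit_idx: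
  fixes K :: "'i::finite \<Rightarrow> nat"
  assumes "mdeg K = 1"
  obtains l where "K = unit_idx l"
proof -
  obtain l where l: "K l \<noteq> 0"
    using assms by (metis mdeg_def sum.neutral zero_neq_one)
  have "mdeg K = K l + (\<Sum>i\<in>UNIV - {l}. K i)"
    unfolding mdeg_def by (simp add: sum.remove[of UNIV l])
  then have "K l = 1" "(\<Sum>i\<in>UNIV - {l}. K i) = 0" using assms l by linarith+
  then have "K = unit_idx l" by (auto simp: unit_idx_def fun_eq_iff sum_eq_0_iff)
  then show thesis ..
qed

lemma unit_idx_le_iff: "(\<forall>i. unit_idx l i \<le> N i) \<longleftrightarrow> 1 \<le> N l"
  by (auto simp: unit_idx_def)

lemma mdeg_minus_unit_idx:
  fixes N :: "'i::finite \<Rightarrow> nat"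
  assumes "1 \<le> N l"
  shows "mdeg (\<lambda>i. N i - unit_idx l i) = mdeg N - 1"
  using mdeg_diff[of "unit_idx l" N] assms unit_idx_le_iff[of l N] by simp

lemma mfact_minus_unit_idx:
  fixes N :: "'i::finite \<Rightarrow> nat"
  assumes "1 \<le> N l"
  shows "real (mfact N) = real (N l) * real (mfact (\<lambda>i. N i - unit_idx l i))"
proof -
  have "(\<Prod>i\<in>UNIV. real (N i choose unit_idx l i)) = real (N l)"
    by (simp add: unit_idx_def if_distrib prod.delta cong: if_cong)
  then show ?thesis
    using mfact_eq_mult_binomial[of "unit_idx l" N] assms unit_idx_le_iff[of l N] by simp
qed

section \<open>Binomial sums\<close>

definition compositions :: "'i set \<Rightarrow> nat \<Rightarrow> ('i \<Rightarrow> nat) set" where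
  "compositions S s = {M. (\<forall>i. i \<notin> S \<longrightarrow> M i = 0) \<and> sum M S = s}"

lemma finite_compositions:
  assumes "finite S"
  shows "finite (compositions S s)"
proof (rule finite_subset)
  show "compositions S s \<subseteq> {M. \<forall>x. (x \<in> S \<longrightarrow> M x \<in> {..s}) \<and> (x \<notin> S \<longrightarrow> M x = 0)}"
    using assms by (auto simp: compositions_def intro: member_le_sum)
  show "finite {M. \<forall>x. (x \<in> S \<longrightarrow> M x \<in> {..s}) \<and> (x \<notin> S \<longrightarrow> M x = (0::nat))}"
    by (rule finite_set_of_finite_funs) (use assms in auto)
qed

lemma compositions_insert:
  assumes "finite S" "x \<notin> S"
  shows "compositions (insert x S) s = (\<lambda>(a, M). M(x := a)) ` (SIGMA a:{..s}. compositions S (s - a))"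
proof (intro equalityI subsetI)
  fix M assume M: "M \<in> compositions (insert x S) s"
  have "sum (M(x := 0)) S = sum M S" using assms by (intro sum.cong) auto
  then have "(M x, M(x := 0)) \<in> (SIGMA a:{..s}. compositions S (s - a))"
    using M assms by (auto simp: compositions_def)
  moreover have "M = (\<lambda>(a, M). M(x := a)) (M x, M(x := 0))" by simp
  ultimately show "M \<in> (\<lambda>(a, M). M(x := a)) ` (SIGMA a:{..s}. compositions S (s - a))" by blast
next
  fix M assume "M \<in> (\<lambda>(a, M). M(x := a)) ` (SIGMA a:{..s}. compositions S (s - a))"
  then obtain a M' where a: "a \<le> s" and M': "M' \<in> compositions S (s - a)" and M: "M = M'(x := a)"
    by auto
  have "sum M S = sum M' S" using assms M by (intro sum.cong) auto
  then show "M \<in> compositions (insert x S) s" using M' a M assms by (auto simp: compositions_def)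
qed

lemma inj_on_compositions_insert:
  assumes "x \<notin> S"
  shows "inj_on (\<lambda>(a, M). M(x := a)) (SIGMA a:{..s}. compositions S (s - a))"
proof (rule inj_onI, clarify)
  fix a M b M'
  assume *: "M(x := a) = M'(x := b)" "M \<in> compositions S (s - a)" "M' \<in> compositions S (s - b)"
  then have "a = b" by (metis fun_upd_same)
  moreover have "M = M'"
  proof
    fix i show "M i = M' i"
      using * assms by (cases "i = x") (auto simp: compositions_def dest: fun_cong[where x=i])
  qed
  ultimately show "a = b \<and> M = M'" by simp
qed

lemma binomial_eq_gbinomial_negated: "real ((p + a) choose p) = (-1)^a * ((- (of_nat p + 1)) gchoose a)"
proof -
  have "((- (of_nat p + 1)) gchoose a) = (-1)^a * ((of_nat a - (- (of_nat p + 1)) - 1) gchoose a :: real)"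
    by (rule gbinomial_negated_upper)
  also have "(of_nat a - (- (of_nat p + 1)) - 1 :: real) = of_nat (p + a)" by simp
  also have "(of_nat (p + a) gchoose a :: real) = real ((p + a) choose a)"
    by (simp add: binomial_gbinomial)
  also have "(p + a) choose a = (p + a) choose p"
    by (simp add: binomial_symmetric[of a "p + a", simplified])
  finally show ?thesis by simp
qed

(* Iterated Vandermonde convolution, for binomials with negative upper index. *)

lemma sum_compositions_prod_binomial:
  fixes N :: "'i \<Rightarrow> nat"
  assumes "finite S"
  shows "(\<Sum>M\<in>compositions S s. \<Prod>i\<in>S. real ((N i + M i) choose N i))
        = (-1)^s * ((- of_nat (sum N S + card S)) gchoose s)"
  using assms
proof (induction S arbitrary: s rule: finite_induct)
  case empty
  have "compositions ({}::'i set) s = (if s = 0 then {\<lambda>_. 0} else {})"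
    by (auto simp: compositions_def)
  then show ?case by (cases s) simp_all
next
  case (insert x S)
  let ?G = "\<lambda>s. \<Sum>M\<in>compositions S s. \<Prod>i\<in>S. real ((N i + M i) choose N i)"
  let ?a = "- (of_nat (N x) + 1) :: real" and ?b = "- of_nat (sum N S + card S) :: real"
  have "(\<Sum>M\<in>compositions (insert x S) s. \<Prod>i\<in>insert x S. real ((N i + M i) choose N i))
      = (\<Sum>a\<le>s. \<Sum>M\<in>compositions S (s - a). \<Prod>i\<in>insert x S. real ((N i + (M(x := a)) i) choose N i))"
    unfolding compositions_insert[OF insert(1,2)]
    by (subst sum.reindex[OF inj_on_compositions_insert[OF insert(2)]])
       (auto simp: sum.Sigma finite_compositions insert(1) case_prod_unfold)
  also have "\<dots> = (\<Sum>a\<le>s. real ((N x + a) choose N x) * ?G (s - a))"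
  proof (intro sum.cong refl)
    fix a
    have "(\<Prod>i\<in>S. real ((N i + (M(x := a)) i) choose N i)) = (\<Prod>i\<in>S. real ((N i + M i) choose N i))" for M
      using insert(2) by (intro prod.cong) auto
    then show "(\<Sum>M\<in>compositions S (s - a). \<Prod>i\<in>insert x S. real ((N i + (M(x := a)) i) choose N i))
        = real ((N x + a) choose N x) * ?G (s - a)"
      using insert(1,2) by (simp add: sum_distrib_left)
  qed
  also have "\<dots> = (\<Sum>a\<le>s. (-1)^s * ((?a gchoose a) * (?b gchoose (s - a))))"
  proof (intro sum.cong refl)
    fix a assume "a \<in> {..s}"
    then have sign: "(-1::real)^s = (-1)^a * (-1)^(s - a)" by (simp add: power_add[symmetric])
    have "real ((N x + a) choose N x) = (-1)^a * (?a gchoose a)"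
      by (rule binomial_eq_gbinomial_negated)
    then show "real ((N x + a) choose N x) * ?G (s - a) = (-1)^s * ((?a gchoose a) * (?b gchoose (s - a)))"
      unfolding insert(3) sign by (simp only: mult_ac)
  qed
  also have "\<dots> = (-1)^s * ((?a + ?b) gchoose s)"
    by (simp add: sum_distrib_left[symmetric] gbinomial_Vandermonde[symmetric] atLeast0AtMost)
  also have "?a + ?b = - of_nat (sum N (insert x S) + card (insert x S))"
    using insert(1,2) by simp
  finally show ?case .
qed

lemma sum_mdeg_eq_prod_binomial:
  fixes N :: "'i::finite \<Rightarrow> nat"
  assumes "mdeg N \<le> k"
  shows "(\<Sum>L | mdeg L = k \<and> (\<forall>i. N i \<le> L i). \<Prod>i\<in>UNIV. real (L i choose N i))
     = real ((k + card (UNIV::'i set) - 1) choose (k - mdeg N))"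
proof -
  define s where "s = k - mdeg N"
  have "(\<Sum>L | mdeg L = k \<and> (\<forall>i. N i \<le> L i). \<Prod>i\<in>UNIV. real (L i choose N i))
      = (\<Sum>M\<in>compositions UNIV s. \<Prod>i\<in>UNIV. real ((N i + M i) choose N i))"
  proof (rule sum.reindex_bij_witness[where i="\<lambda>M i. N i + M i" and j="\<lambda>L i. L i - N i"])
    fix M :: "'i \<Rightarrow> nat" assume "M \<in> compositions UNIV s"
    then have "mdeg M = s" by (simp add: compositions_def mdeg_def)
    then show "(\<lambda>i. N i + M i) \<in> {L. mdeg L = k \<and> (\<forall>i. N i \<le> L i)}"
      using assms by (simp add: mdeg_add s_def)
  next
    fix L :: "'i \<Rightarrow> nat" assume L: "L \<in> {L. mdeg L = k \<and> (\<forall>i. N i \<le> L i)}"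
    then show "(\<lambda>i. N i + (L i - N i)) = L" by (intro ext) simp
    have "mdeg (\<lambda>i. L i - N i) = s" using L mdeg_diff[of N L] by (simp add: s_def)
    then show "(\<lambda>i. L i - N i) \<in> compositions UNIV s" by (simp add: compositions_def mdeg_def)
  qed auto
  also have "\<dots> = (-1)^s * ((- of_nat (mdeg N + card (UNIV::'i set))) gchoose s)"
    using sum_compositions_prod_binomial[of "UNIV::'i set" N s] by (simp add: mdeg_def)
  also have "\<dots> = ((of_nat (mdeg N + card (UNIV::'i set)) + of_nat s - 1) gchoose s :: real)"
    by (simp only: gbinomial_minus mult.assoc[symmetric] power_mult_distrib[symmetric]) simp
  also have "(of_nat (mdeg N + card (UNIV::'i set)) + of_nat s - 1 :: real) = of_nat (k + card (UNIV::'i set) - 1)"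
    using assms finite_UNIV_card_ge_0[where 'a='i] by (simp add: s_def of_nat_diff)
  finally show ?thesis by (simp add: binomial_gbinomial s_def)
qed

lemma alternating_sum_binomial:
  assumes "1 \<le> m"
  shows "(\<Sum>j\<le>k. (-1)^j * real (m choose (k - j))) = real ((m - 1) choose k)"
proof (induction k)
  case (Suc k)
  have "(\<Sum>j\<le>Suc k. (-1)^j * real (m choose (Suc k - j)))
      = real (m choose Suc k) - (\<Sum>j\<le>k. (-1)^j * real (m choose (k - j)))"
    by (subst sum.atMost_Suc_shift) (simp add: sum_negf)
  also have "m choose Suc k = ((m - 1) choose k) + ((m - 1) choose Suc k)"
    using assms by (metis Suc_diff_le binomial_Suc_Suc diff_Suc_1)
  finally show ?case using Suc by simp
qed simp

lemma alternating_sum_binomial_pos: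
  assumes "k = 0 \<or> 2 \<le> n"
  shows "0 < (\<Sum>j\<le>k. (-1)^j * real ((k + n - 1) choose (k - j)))"
proof (cases "k = 0")
  case False
  then have "2 \<le> n" using assms by simp
  then have "(\<Sum>j\<le>k. (-1)^j * real ((k + n - 1) choose (k - j))) = real ((k + n - 1 - 1) choose k)"
    by (intro alternating_sum_binomial) simp
  then show ?thesis using \<open>2 \<le> n\<close> by (simp add: zero_less_binomial_iff)
qed simp

section \<open>Wick multiplication by J - \<nu>\<close>

definition wick_term :: "real \<Rightarrow> ('i::finite) cpoly \<Rightarrow> 'i cpoly \<Rightarrow> ('i \<Rightarrow> nat) \<Rightarrow> ('i \<Rightarrow> nat) \<Rightarrow> 'i mon \<Rightarrow> 'i mon \<Rightarrow> complex" where
  "wick_term h p q P Q a b = (\<Sum>M\<in>{M. \<forall>i. M i \<le> snd a i \<and> M i \<le> fst b i}.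
        if (\<lambda>i. fst a i + fst b i - M i) = P \<and> (\<lambda>i. snd a i - M i + snd b i) = Q
        then complex_of_real (h ^ mdeg M) / of_nat (mfact M)
             * (\<Prod>i\<in>UNIV. of_nat (fact (snd a i)) / of_nat (fact (snd a i - M i)))
             * (\<Prod>i\<in>UNIV. of_nat (fact (fst b i)) / of_nat (fact (fst b i - M i)))
             * p a * q b
        else 0)"

lemma wick_eq_sum_superset:
  assumes "finite A" "finite B" "supp p \<subseteq> A" "supp q \<subseteq> B"
  shows "wick h p q (P, Q) = (\<Sum>a\<in>A. \<Sum>b\<in>B. wick_term h p q P Q a b)"
proof -
  have zero: "wick_term h p q P Q a b = 0" if "p a = 0 \<or> q b = 0" for a b
    using that unfolding wick_term_def by (intro sum.neutral ballI) auto
  have "wick h p q (P, Q) = (\<Sum>a\<in>supp p. \<Sum>b\<in>supp q. wick_term h p q P Q a b)"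
    by (simp add: wick_def wick_term_def)
  also have "\<dots> = (\<Sum>a\<in>A. \<Sum>b\<in>supp q. wick_term h p q P Q a b)"
    by (rule sum.mono_neutral_left) (use assms zero in \<open>auto simp: supp_def intro!: sum.neutral\<close>)
  also have "\<dots> = (\<Sum>a\<in>A. \<Sum>b\<in>B. wick_term h p q P Q a b)"
    by (intro sum.cong refl sum.mono_neutral_left) (use assms zero in \<open>auto simp: supp_def\<close>)
  finally show ?thesis .
qed

lemma sum_supp_delta:
  assumes "finite (supp q)"
  shows "(\<Sum>b\<in>supp q. if b = c then g * q b else 0) = g * q c"
  using assms by (simp add: sum.delta supp_def)

definition J_minus :: "real \<Rightarrow> ('i::finite) cpoly" where
  "J_minus \<nu> = (\<lambda>m. Jpoly m - complex_of_real \<nu> * one_poly m)"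

lemma supp_J_minus:
  "supp (J_minus \<nu> :: ('i::finite) cpoly) \<subseteq> insert ((\<lambda>_. 0), (\<lambda>_. 0)) (range (\<lambda>l. (unit_idx l, unit_idx l)))"
proof
  fix m :: "'i mon" assume "m \<in> supp (J_minus \<nu>)"
  then obtain K L where m: "m = (K, L)" and nz: "J_minus \<nu> (K, L) \<noteq> 0"
    by (cases m) (auto simp: supp_def)
  show "m \<in> insert ((\<lambda>_. 0), (\<lambda>_. 0)) (range (\<lambda>l. (unit_idx l, unit_idx l)))"
  proof (cases "(K, L) = ((\<lambda>_. 0), (\<lambda>_. 0))")
    case False
    then have "K = L" "mdeg K = 1"
      using nz by (auto simp: J_minus_def Jpoly_def one_poly_def split: if_splits)
    then obtain l where "K = unit_idx l" "L = unit_idx l" using mdeg_eq_1_imp_unit_idx by metis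
    then show ?thesis using m by simp
  qed (use m in auto)
qed

lemma J_minus_zero: "J_minus \<nu> ((\<lambda>_::'i::finite. 0), (\<lambda>_. 0)) = - complex_of_real \<nu>"
  by (simp add: J_minus_def Jpoly_def one_poly_def)

lemma J_minus_unit_idx: "J_minus \<nu> (unit_idx (l::'i::finite), unit_idx l) = 1"
  using unit_idx_neq_zero[of l] by (simp add: J_minus_def Jpoly_def one_poly_def)

lemma prod_fact_minus_unit_idx:
  fixes B :: "'i::finite \<Rightarrow> nat"
  assumes "1 \<le> B l"
  shows "(\<Prod>i\<in>UNIV. fact (B i) / fact (B i - unit_idx l i) :: complex) = of_nat (B l)"
proof -
  have "(fact (B i) / fact (B i - unit_idx l i) :: complex) = (if i = l then of_nat (B l) else 1)" for i
  proof (cases "i = l")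
    case True
    have "(fact (B l) :: complex) = of_nat (B l) * fact (B l - 1)"
      using assms by (simp add: fact_reduce)
    then show ?thesis using True by (simp add: unit_idx_def)
  qed (simp add: unit_idx_def)
  then show ?thesis by simp
qed

lemma le_zero_set: "{M. \<forall>i. M i \<le> (0::nat) \<and> M i \<le> B i} = {\<lambda>_. 0}"
  by (auto simp: fun_eq_iff)

lemma le_unit_idx_set:
  "{M. \<forall>i. M i \<le> unit_idx l i \<and> M i \<le> B i} = (if 1 \<le> B l then {\<lambda>_. 0, unit_idx l} else {\<lambda>_. 0})"
proof -
  have "M = (\<lambda>_. 0) \<or> M = unit_idx l" if "\<forall>i. M i \<le> unit_idx l i" for M
  proof (cases "M l = 0")
    case True
    then have "M = (\<lambda>_. 0)" using that by (auto simp: fun_eq_iff unit_idx_def split: if_splits)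
    then show ?thesis ..
  next
    case False
    have "M l \<le> 1" using that[rule_format, of l] by (simp add: unit_idx_def)
    then have "M = unit_idx l" using that False by (auto simp: fun_eq_iff unit_idx_def split: if_splits)
    then show ?thesis ..
  qed
  moreover have "unit_idx l i \<le> B i" if "1 \<le> B l" for i using that by (simp add: unit_idx_def)
  moreover have "\<not> unit_idx l l \<le> B l" if "\<not> 1 \<le> B l" using that by (simp add: unit_idx_def)
  ultimately show ?thesis by (auto simp del: One_nat_def)
qed

lemma unit_idx_plus_eq_iff:
  "(\<lambda>i. unit_idx l i + A i) = P \<longleftrightarrow> 1 \<le> P l \<and> A = (\<lambda>i. P i - unit_idx l i)"
  by (auto simp: fun_eq_iff unit_idx_def split: if_splits)

lemma wick_term_J_minus_zero:
  "wick_term h (J_minus \<nu>) q P Q ((\<lambda>_::'i::finite. 0), (\<lambda>_. 0)) b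
     = (if b = (P, Q) then - complex_of_real \<nu> * q b else 0)"
  by (cases b) (simp only: wick_term_def fst_conv snd_conv le_zero_set sum.insert finite.emptyI
      empty_iff sum.empty, simp add: J_minus_zero)

lemma wick_term_J_minus_unit_idx:
  fixes l :: "'i::finite"
  shows "wick_term h (J_minus \<nu>) q P Q (unit_idx l, unit_idx l) b
     = (if b = (\<lambda>i. P i - unit_idx l i, \<lambda>i. Q i - unit_idx l i)
        then (if 1 \<le> P l \<and> 1 \<le> Q l then 1 else 0) * q b else 0)
       + (if b = (P, Q) then complex_of_real h * of_nat (P l) * q b else 0)"
proof (cases b)
  case (Pair B1 B2)
  have no_contraction:
    "(if (\<lambda>i. unit_idx l i + B1 i - 0) = P \<and> (\<lambda>i. unit_idx l i - 0 + B2 i) = Q then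
        complex_of_real (h ^ mdeg (\<lambda>_::'i. 0::nat)) / of_nat (mfact (\<lambda>_::'i. 0::nat))
         * (\<Prod>i\<in>UNIV. of_nat (fact (unit_idx l i)) / of_nat (fact (unit_idx l i - 0)))
         * (\<Prod>i\<in>UNIV. of_nat (fact (B1 i)) / of_nat (fact (B1 i - 0)))
         * J_minus \<nu> (unit_idx l, unit_idx l) * q (B1, B2) else 0)
      = (if (B1, B2) = (\<lambda>i. P i - unit_idx l i, \<lambda>i. Q i - unit_idx l i)
         then (if 1 \<le> P l \<and> 1 \<le> Q l then 1 else 0) * q (B1, B2) else 0)"
    using unit_idx_plus_eq_iff[of l B1 P] unit_idx_plus_eq_iff[of l B2 Q] by (auto simp: J_minus_unit_idx)
  show ?thesis
  proof (cases "1 \<le> B1 l")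
    case True
    have contraction:
      "(if (\<lambda>i. unit_idx l i + B1 i - unit_idx l i) = P \<and> (\<lambda>i. unit_idx l i - unit_idx l i + B2 i) = Q then
          complex_of_real (h ^ mdeg (unit_idx l)) / of_nat (mfact (unit_idx l))
           * (\<Prod>i\<in>UNIV. of_nat (fact (unit_idx l i)) / of_nat (fact (unit_idx l i - unit_idx l i)))
           * (\<Prod>i\<in>UNIV. of_nat (fact (B1 i)) / of_nat (fact (B1 i - unit_idx l i)))
           * J_minus \<nu> (unit_idx l, unit_idx l) * q (B1, B2) else 0)
        = (if (B1, B2) = (P, Q) then complex_of_real h * of_nat (P l) * q (B1, B2) else 0)"
      using True by (auto simp: J_minus_unit_idx prod_fact_minus_unit_idx)
    have "(\<lambda>_::'i. 0::nat) \<noteq> unit_idx l" using unit_idx_neq_zero by metis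
    then have sum2: "(\<Sum>M\<in>{\<lambda>_. 0, unit_idx l}. g M) = g (\<lambda>_. 0) + g (unit_idx l)"
      for g :: "('i \<Rightarrow> nat) \<Rightarrow> complex" by simp
    show ?thesis
      unfolding wick_term_def Pair fst_conv snd_conv le_unit_idx_set if_P[OF True] sum2
        no_contraction contraction by simp
  next
    case False
    then have "(if (B1, B2) = (P, Q) then complex_of_real h * of_nat (P l) * q (B1, B2) else 0) = 0"
      by auto
    moreover have sum1: "(\<Sum>M\<in>{\<lambda>_. 0}. g M) = g (\<lambda>_. 0)" for g :: "('i \<Rightarrow> nat) \<Rightarrow> complex"
      by simp
    ultimately show ?thesis
      unfolding wick_term_def Pair fst_conv snd_conv le_unit_idx_set if_not_P[OF False] sum1
        no_contraction by simp
  qed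
qed

(* (J - \<nu>) q + h \<Sum>l z_l \<partial>q/\<partial>z_l: only contractions of order 0 and 1 survive. *)

lemma wick_J_minus:
  fixes q :: "('i::finite) cpoly"
  assumes fq: "finite (supp q)"
  shows "wick h (J_minus \<nu>) q (P, Q)
      = (\<Sum>l\<in>UNIV. if 1 \<le> P l \<and> 1 \<le> Q l then q (\<lambda>i. P i - unit_idx l i, \<lambda>i. Q i - unit_idx l i) else 0)
        + complex_of_real (h * real (mdeg P) - \<nu>) * q (P, Q)"
proof -
  let ?z = "((\<lambda>_::'i. 0::nat), (\<lambda>_::'i. 0::nat))"
  let ?E = "\<lambda>l::'i. (unit_idx l, unit_idx l)"
  have "?z \<notin> range ?E" using unit_idx_neq_zero by (metis (mono_tags) Pair_inject rangeE)
  moreover have "inj ?E" using inj_unit_idx by (auto simp: inj_def)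
  moreover have "wick h (J_minus \<nu>) q (P, Q)
      = (\<Sum>a\<in>insert ?z (range ?E). \<Sum>b\<in>supp q. wick_term h (J_minus \<nu>) q P Q a b)"
    by (rule wick_eq_sum_superset[OF _ fq supp_J_minus]) simp_all
  ultimately have "wick h (J_minus \<nu>) q (P, Q) = (\<Sum>b\<in>supp q. wick_term h (J_minus \<nu>) q P Q ?z b)
      + (\<Sum>l\<in>UNIV. \<Sum>b\<in>supp q. wick_term h (J_minus \<nu>) q P Q (?E l) b)"
    by (simp add: sum.reindex)
  also have "\<dots> = - complex_of_real \<nu> * q (P, Q)
      + (\<Sum>l\<in>UNIV. (if 1 \<le> P l \<and> 1 \<le> Q l then q (\<lambda>i. P i - unit_idx l i, \<lambda>i. Q i - unit_idx l i) else 0)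
         + complex_of_real h * of_nat (P l) * q (P, Q))"
    unfolding wick_term_J_minus_zero wick_term_J_minus_unit_idx sum.distrib sum_supp_delta[OF fq]
    by (simp add: if_distrib[of "\<lambda>x. x * _"] cong: if_cong)
  finally show ?thesis
    by (simp add: sum.distrib mdeg_def sum_distrib_left sum_distrib_right algebra_simps)
qed

section \<open>Weighted squares of holomorphic polynomials\<close>

lemma cstar_apply: "cstar p (K, L) = cnj (p (L, K))"
  by (simp add: cstar_def)

definition hol_supp :: "('i::finite) cpoly \<Rightarrow> ('i \<Rightarrow> nat) set" where
  "hol_supp f = {K. f (K, \<lambda>_. 0) \<noteq> 0}"

lemma Pkl_k0_nonzero:
  fixes f :: "('i::finite) cpoly"
  assumes "f \<in> Pkl k 0" "f (K, L) \<noteq> 0"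
  shows "L = (\<lambda>_. 0)" "mdeg K = k"
  using assms mdeg_eq_0_iff[of L] by (auto simp: Pkl_def)

lemma mdeg_hol_supp: "(f::('i::finite) cpoly) \<in> Pkl k 0 \<Longrightarrow> K \<in> hol_supp f \<Longrightarrow> mdeg K = k"
  using Pkl_k0_nonzero by (auto simp: hol_supp_def)

lemma supp_Pkl_k0:
  fixes f :: "('i::finite) cpoly"
  assumes "f \<in> Pkl k 0"
  shows "supp f = (\<lambda>K. (K, \<lambda>_. 0)) ` hol_supp f"
proof (intro equalityI subsetI)
  fix m assume "m \<in> supp f"
  then obtain K L where m: "m = (K, L)" "f (K, L) \<noteq> 0" by (cases m) (auto simp: supp_def)
  then have "L = (\<lambda>_. 0)" using Pkl_k0_nonzero(1)[OF assms] by blast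
  then show "m \<in> (\<lambda>K. (K, \<lambda>_. 0)) ` hol_supp f" using m by (auto simp: hol_supp_def)
qed (auto simp: supp_def hol_supp_def)

lemma supp_cstar_Pkl_k0:
  fixes f :: "('i::finite) cpoly"
  assumes "f \<in> Pkl k 0"
  shows "supp (cstar f) = (\<lambda>K. (\<lambda>_. 0, K)) ` hol_supp f"
proof (intro equalityI subsetI)
  fix m assume "m \<in> supp (cstar f)"
  then obtain K L where m: "m = (L, K)" "f (K, L) \<noteq> 0" by (cases m) (auto simp: supp_def cstar_def)
  then have "L = (\<lambda>_. 0)" using Pkl_k0_nonzero(1)[OF assms] by blast
  then show "m \<in> (\<lambda>K. (\<lambda>_. 0, K)) ` hol_supp f" using m by (auto simp: hol_supp_def)
qed (auto simp: supp_def hol_supp_def cstar_def)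

lemma finite_hol_supp:
  fixes f :: "('i::finite) cpoly"
  assumes "f \<in> Pkl k 0"
  shows "finite (hol_supp f)"
proof -
  have "finite (fst ` supp f)" using assms by (simp add: Pkl_def)
  moreover have "fst ` supp f = hol_supp f" using supp_Pkl_k0[OF assms] by (simp add: image_image)
  ultimately show ?thesis by simp
qed

lemma sum_sum_delta_pair:
  assumes "finite S"
  shows "(\<Sum>x\<in>S. \<Sum>y\<in>S. if x = a \<and> y = b then g x y else 0) = (if a \<in> S \<and> b \<in> S then g a b else 0)"
proof -
  have "(\<Sum>x\<in>S. \<Sum>y\<in>S. if x = a \<and> y = b then g x y else 0)
      = (\<Sum>x\<in>S. if x = a then (\<Sum>y\<in>S. if y = b then g x y else 0) else 0)"
    by (intro sum.cong refl) auto
  then show ?thesis using assms by (simp add: sum.delta)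
qed

lemma pmult_cstar_Pkl_k0:
  fixes f :: "('i::finite) cpoly"
  assumes f: "f \<in> Pkl k 0"
  shows "pmult f (cstar f) (P, Q) = f (P, \<lambda>_. 0) * cnj (f (Q, \<lambda>_. 0))"
proof -
  have inj1: "inj_on (\<lambda>K. (K, \<lambda>_::'i. 0::nat)) A" for A by (auto simp: inj_on_def)
  have inj2: "inj_on (\<lambda>K. (\<lambda>_::'i. 0::nat, K)) A" for A by (auto simp: inj_on_def)
  have "pmult f (cstar f) (P, Q) = (\<Sum>K1\<in>hol_supp f. \<Sum>K2\<in>hol_supp f.
      if K1 = P \<and> K2 = Q then f (K1, \<lambda>_. 0) * cnj (f (K2, \<lambda>_. 0)) else 0)"
    unfolding pmult_def supp_Pkl_k0[OF f] supp_cstar_Pkl_k0[OF f]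
    by (simp add: sum.reindex[OF inj1] sum.reindex[OF inj2]) (intro sum.cong refl, simp add: cstar_apply)
  then show ?thesis
    unfolding sum_sum_delta_pair[OF finite_hol_supp[OF f]] by (auto simp: hol_supp_def)
qed

(* The polynomial f(z) conj(f(z)) \<Sum>N w(N) z^N zbar^N. *)

definition weighted_square :: "('i::finite) cpoly \<Rightarrow> (('i \<Rightarrow> nat) \<Rightarrow> complex) \<Rightarrow> 'i cpoly" where
  "weighted_square f w = (\<lambda>(P, Q). \<Sum>K1\<in>hol_supp f. \<Sum>K2\<in>hol_supp f.
     if (\<forall>i. K1 i \<le> P i) \<and> (\<forall>i. K2 i \<le> Q i) \<and> (\<lambda>i. P i - K1 i) = (\<lambda>i. Q i - K2 i)
     then f (K1, \<lambda>_. 0) * cnj (f (K2, \<lambda>_. 0)) * w (\<lambda>i. P i - K1 i) else 0)"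

lemma weighted_square_apply:
  "weighted_square f w (P, Q) = (\<Sum>K1\<in>hol_supp f. \<Sum>K2\<in>hol_supp f.
     if (\<forall>i. K1 i \<le> P i) \<and> (\<forall>i. K2 i \<le> Q i) \<and> (\<lambda>i. P i - K1 i) = (\<lambda>i. Q i - K2 i)
     then f (K1, \<lambda>_. 0) * cnj (f (K2, \<lambda>_. 0)) * w (\<lambda>i. P i - K1 i) else 0)"
  by (simp add: weighted_square_def)

definition delta_zero :: "('i \<Rightarrow> nat) \<Rightarrow> complex" where
  "delta_zero N = (if N = (\<lambda>_. 0) then 1 else 0)"

lemma pmult_cstar_eq_weighted_square:
  fixes f :: "('i::finite) cpoly"
  assumes f: "f \<in> Pkl k 0"
  shows "pmult f (cstar f) = weighted_square f delta_zero"
proof (rule ext, clarify)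
  fix P Q :: "'i \<Rightarrow> nat"
  have "(if (\<forall>i. K1 i \<le> P i) \<and> (\<forall>i. K2 i \<le> Q i) \<and> (\<lambda>i. P i - K1 i) = (\<lambda>i. Q i - K2 i)
       then f (K1, \<lambda>_. 0) * cnj (f (K2, \<lambda>_. 0)) * delta_zero (\<lambda>i. P i - K1 i) else 0)
     = (if K1 = P \<and> K2 = Q then f (K1, \<lambda>_. 0) * cnj (f (K2, \<lambda>_. 0)) else 0)" for K1 K2
  proof (cases "(\<forall>i. K1 i \<le> P i) \<and> (\<forall>i. K2 i \<le> Q i) \<and> (\<lambda>i. P i - K1 i) = (\<lambda>i. Q i - K2 i)")
    case True
    have sub_eq_0: "((\<forall>i. K i \<le> R i) \<and> (\<lambda>i. R i - K i) = (\<lambda>_. 0)) \<longleftrightarrow> K = R"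
      for K R :: "'i \<Rightarrow> nat"
      by (auto simp: fun_eq_iff intro: le_antisym)
    have "(\<lambda>i. P i - K1 i) = (\<lambda>_. 0) \<longleftrightarrow> K1 = P \<and> K2 = Q"
      using True sub_eq_0[of K1 P] sub_eq_0[of K2 Q] by auto
    then show ?thesis unfolding if_P[OF True] delta_zero_def by simp
  next
    case False
    then have not_PQ: "\<not> (K1 = P \<and> K2 = Q)" by auto
    show ?thesis unfolding if_not_P[OF False] if_not_P[OF not_PQ] ..
  qed
  then have "weighted_square f delta_zero (P, Q) = (\<Sum>K1\<in>hol_supp f. \<Sum>K2\<in>hol_supp f.
      if K1 = P \<and> K2 = Q then f (K1, \<lambda>_. 0) * cnj (f (K2, \<lambda>_. 0)) else 0)"
    unfolding weighted_square_apply by (intro sum.cong refl) simp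
  then show "pmult f (cstar f) (P, Q) = weighted_square f delta_zero (P, Q)"
    unfolding sum_sum_delta_pair[OF finite_hol_supp[OF f]] pmult_cstar_Pkl_k0[OF f]
    by (auto simp: hol_supp_def)
qed

lemma cstar_weighted_square: "cstar (weighted_square (f::('i::finite) cpoly) w) = weighted_square f (\<lambda>N. cnj (w N))"
proof (rule ext, clarify)
  fix P Q :: "'i \<Rightarrow> nat"
  let ?c = "\<lambda>P Q K1 K2. (\<forall>i. K1 i \<le> P i) \<and> (\<forall>i. K2 i \<le> Q i) \<and> (\<lambda>i. P i - K1 i) = (\<lambda>i. Q i - K2 i)"
  have "cstar (weighted_square f w) (P,Q) = (\<Sum>K1\<in>hol_supp f. \<Sum>K2\<in>hol_supp f.
     if ?c Q P K1 K2 then cnj (f (K1, \<lambda>_. 0)) * f (K2, \<lambda>_. 0) * cnj (w (\<lambda>i. Q i - K1 i)) else 0)"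
    unfolding cstar_apply weighted_square_apply cnj_sum by (intro sum.cong refl) simp
  also have "\<dots> = (\<Sum>K2\<in>hol_supp f. \<Sum>K1\<in>hol_supp f.
     if ?c Q P K1 K2 then cnj (f (K1, \<lambda>_. 0)) * f (K2, \<lambda>_. 0) * cnj (w (\<lambda>i. Q i - K1 i)) else 0)"
    by (rule sum.swap)
  also have "\<dots> = weighted_square f (\<lambda>N. cnj (w N)) (P,Q)"
    unfolding weighted_square_apply
  proof (intro sum.cong refl)
    fix K1 K2
    show "(if ?c Q P K2 K1 then cnj (f (K2, \<lambda>_. 0)) * f (K1, \<lambda>_. 0) * cnj (w (\<lambda>i. Q i - K2 i)) else 0)
      = (if ?c P Q K1 K2 then f (K1, \<lambda>_. 0) * cnj (f (K2, \<lambda>_. 0)) * cnj (w (\<lambda>i. P i - K1 i)) else 0)"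
    proof (cases "?c P Q K1 K2")
      case True
      then have "?c Q P K2 K1" by metis
      then show ?thesis using True by (simp add: mult_ac)
    next
      case False
      then have "\<not> ?c Q P K2 K1" by metis
      then show ?thesis using False by (simp only: if_False if_not_P)
    qed
  qed
  finally show "cstar (weighted_square f w) (P,Q) = weighted_square f (\<lambda>N. cnj (w N)) (P,Q)" .
qed

lemma weighted_square_sum:
  assumes "finite I"
  shows "weighted_square f (\<lambda>N. \<Sum>L\<in>I. w L N) m = (\<Sum>L\<in>I. weighted_square f (w L) m)"
proof (cases m)
  case (Pair P Q)
  have if_sum: "(if c then a * x * (\<Sum>L\<in>I. g L) else 0) = (\<Sum>L\<in>I. if c then a * x * g L else (0::complex))"
    for c a x g by (cases c) (simp_all add: sum_distrib_left mult_ac)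
  have "weighted_square f (\<lambda>N. \<Sum>L\<in>I. w L N) (P,Q) = (\<Sum>K1\<in>hol_supp f. \<Sum>K2\<in>hol_supp f. \<Sum>L\<in>I.
     if (\<forall>i. K1 i \<le> P i) \<and> (\<forall>i. K2 i \<le> Q i) \<and> (\<lambda>i. P i - K1 i) = (\<lambda>i. Q i - K2 i)
     then f (K1, \<lambda>_. 0) * cnj (f (K2, \<lambda>_. 0)) * w L (\<lambda>i. P i - K1 i) else 0)"
    unfolding weighted_square_apply by (intro sum.cong refl if_sum)
  also have "\<dots> = (\<Sum>K1\<in>hol_supp f. \<Sum>L\<in>I. \<Sum>K2\<in>hol_supp f.
     if (\<forall>i. K1 i \<le> P i) \<and> (\<forall>i. K2 i \<le> Q i) \<and> (\<lambda>i. P i - K1 i) = (\<lambda>i. Q i - K2 i)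
     then f (K1, \<lambda>_. 0) * cnj (f (K2, \<lambda>_. 0)) * w L (\<lambda>i. P i - K1 i) else 0)"
    by (intro sum.cong refl sum.swap)
  also have "\<dots> = (\<Sum>L\<in>I. weighted_square f (w L) (P,Q))"
    unfolding weighted_square_apply by (rule sum.swap)
  finally show ?thesis using Pair by simp
qed

lemma weighted_square_add: "weighted_square f (\<lambda>N. w1 N + w2 N) m = weighted_square f w1 m + weighted_square f w2 m"
proof (cases m)
  case (Pair P Q)
  have H: "(if c then a * (x + y) else 0) = (if c then a * x else 0) + (if c then a * y else (0::complex))" for c a x y
    by (simp add: distrib_left)
  show ?thesis unfolding Pair weighted_square_apply sum.distrib[symmetric] H ..
qed
lemma weighted_square_nonzero:
  assumes "weighted_square f w (P,Q) \<noteq> 0"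
  shows "\<exists>K1\<in>hol_supp f. \<exists>K2\<in>hol_supp f. \<exists>N. P = (\<lambda>i. K1 i + N i) \<and> Q = (\<lambda>i. K2 i + N i) \<and> w N \<noteq> 0"
proof -
  obtain K1 where K1: "K1 \<in> hol_supp f" and s1: "(\<Sum>K2\<in>hol_supp f.
     if (\<forall>i. K1 i \<le> P i) \<and> (\<forall>i. K2 i \<le> Q i) \<and> (\<lambda>i. P i - K1 i) = (\<lambda>i. Q i - K2 i)
     then f (K1, \<lambda>_. 0) * cnj (f (K2, \<lambda>_. 0)) * w (\<lambda>i. P i - K1 i) else 0) \<noteq> 0"
    using assms unfolding weighted_square_apply by (rule sum.not_neutral_contains_not_neutral)
  obtain K2 where K2: "K2 \<in> hol_supp f" and nz: "(if (\<forall>i. K1 i \<le> P i) \<and> (\<forall>i. K2 i \<le> Q i) \<and> (\<lambda>i. P i - K1 i) = (\<lambda>i. Q i - K2 i)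
     then f (K1, \<lambda>_. 0) * cnj (f (K2, \<lambda>_. 0)) * w (\<lambda>i. P i - K1 i) else 0) \<noteq> 0"
    using s1 by (rule sum.not_neutral_contains_not_neutral)
  have c: "(\<forall>i. K1 i \<le> P i) \<and> (\<forall>i. K2 i \<le> Q i) \<and> (\<lambda>i. P i - K1 i) = (\<lambda>i. Q i - K2 i)"
  proof (rule ccontr)
    assume a: "\<not> ((\<forall>i. K1 i \<le> P i) \<and> (\<forall>i. K2 i \<le> Q i) \<and> (\<lambda>i. P i - K1 i) = (\<lambda>i. Q i - K2 i))"
    show False using nz unfolding if_not_P[OF a] by simp
  qed
  have w: "w (\<lambda>i. P i - K1 i) \<noteq> 0" using nz unfolding if_P[OF c] by simp
  have eqP: "P = (\<lambda>i. K1 i + (P i - K1 i))" using c by (intro ext) simp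
  have eqQ: "Q = (\<lambda>i. K2 i + (P i - K1 i))"
  proof
    fix i have "P i - K1 i = Q i - K2 i" using c by (metis (mono_tags))
    then show "Q i = K2 i + (P i - K1 i)" using c by simp
  qed
  show ?thesis
    apply (rule bexI[OF _ K1], rule bexI[OF _ K2], rule exI[of _ "\<lambda>i. P i - K1 i"])
    by (intro conjI eqP eqQ w)
qed


lemma finite_supp_weighted_square:
  fixes f :: "('i::finite) cpoly"
  assumes f: "f \<in> Pkl k 0" and d: "\<And>N. w N \<noteq> 0 \<Longrightarrow> mdeg N \<le> d"
  shows "finite (supp (weighted_square f w))"
proof (rule finite_subset)
  let ?S = "(\<lambda>(K1, K2, N). ((\<lambda>i. K1 i + N i), (\<lambda>i. K2 i + N i))) ` (hol_supp f \<times> hol_supp f \<times> {N. mdeg N \<le> d})"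
  show "supp (weighted_square f w) \<subseteq> ?S"
  proof
    fix m assume "m \<in> supp (weighted_square f w)"
    then obtain P Q where m: "m = (P, Q)" "weighted_square f w (P, Q) \<noteq> 0"
      by (cases m) (auto simp: supp_def)
    then obtain K1 K2 N where "K1 \<in> hol_supp f" "K2 \<in> hol_supp f" "w N \<noteq> 0"
      and "P = (\<lambda>i. K1 i + N i)" "Q = (\<lambda>i. K2 i + N i)"
      using weighted_square_nonzero by blast
    then show "m \<in> ?S" using d m by (intro rev_image_eqI[of "(K1, K2, N)"]) auto
  qed
  show "finite ?S" using finite_hol_supp[OF f] finite_mdeg_le by blast
qed

lemma weighted_square_in_Bset:
  fixes f :: "('i::finite) cpoly"
  assumes f: "f \<in> Pkl k 0" and d: "\<And>N. w N \<noteq> 0 \<Longrightarrow> mdeg N \<le> d"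
  shows "weighted_square f w \<in> Bset"
  unfolding Bset_def
proof (intro CollectI conjI allI impI)
  show "finite (supp (weighted_square f w))" by (rule finite_supp_weighted_square[OF f d])
  fix P Q assume "weighted_square f w (P,Q) \<noteq> 0"
  then obtain K1 K2 N where "K1 \<in> hol_supp f" "K2 \<in> hol_supp f" "P = (\<lambda>i. K1 i + N i)" "Q = (\<lambda>i. K2 i + N i)"
    using weighted_square_nonzero by blast
  then show "mdeg P = mdeg Q" using mdeg_hol_supp[OF f] by (simp add: mdeg_add)
qed

(* If w is the weight of W, then J_action h w is the weight of |z|^2 W + h (1 + E) W. *)

definition J_action :: "real \<Rightarrow> (('i::finite \<Rightarrow> nat) \<Rightarrow> complex) \<Rightarrow> ('i \<Rightarrow> nat) \<Rightarrow> complex" where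
  "J_action h w N = (\<Sum>l\<in>UNIV. if 1 \<le> N l then w (\<lambda>i. N i - unit_idx l i) else 0)
      + complex_of_real (h * (real (mdeg N) + 1)) * w N"

lemma excess_minus_unit_idx_iff:
  assumes "1 \<le> P l" "1 \<le> Q l"
  shows "((\<forall>i. K1 i \<le> P i - unit_idx l i) \<and> (\<forall>i. K2 i \<le> Q i - unit_idx l i) \<and> (\<lambda>i. P i - unit_idx l i - K1 i) = (\<lambda>i. Q i - unit_idx l i - K2 i))
     \<longleftrightarrow> (((\<forall>i. K1 i \<le> P i) \<and> (\<forall>i. K2 i \<le> Q i) \<and> (\<lambda>i. P i - K1 i) = (\<lambda>i. Q i - K2 i)) \<and> 1 \<le> P l - K1 l)"
proof -
  let ?A = "\<lambda>i. K1 i \<le> P i - unit_idx l i \<and> K2 i \<le> Q i - unit_idx l i \<and> P i - unit_idx l i - K1 i = Q i - unit_idx l i - K2 i"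
  let ?B = "\<lambda>i. K1 i \<le> P i \<and> K2 i \<le> Q i \<and> P i - K1 i = Q i - K2 i"
  have L: "((\<forall>i. K1 i \<le> P i - unit_idx l i) \<and> (\<forall>i. K2 i \<le> Q i - unit_idx l i) \<and> (\<lambda>i. P i - unit_idx l i - K1 i) = (\<lambda>i. Q i - unit_idx l i - K2 i)) \<longleftrightarrow> (\<forall>i. ?A i)"
    by (auto simp: fun_eq_iff)
  have R: "((\<forall>i. K1 i \<le> P i) \<and> (\<forall>i. K2 i \<le> Q i) \<and> (\<lambda>i. P i - K1 i) = (\<lambda>i. Q i - K2 i)) \<longleftrightarrow> (\<forall>i. ?B i)"
    by (auto simp: fun_eq_iff)
  have Ai: "?A i \<longleftrightarrow> ?B i" if "i \<noteq> l" for i using that by (simp add: unit_idx_def)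
  have Al: "?A l \<longleftrightarrow> ?B l \<and> 1 \<le> P l - K1 l" using assms by (simp add: unit_idx_def) arith
  show ?thesis unfolding L R using Ai Al by metis
qed

lemma weighted_square_minus_unit_idx:
  "(if 1 \<le> P l \<and> 1 \<le> Q l then weighted_square f w (\<lambda>i. P i - unit_idx l i, \<lambda>i. Q i - unit_idx l i) else 0)
   = (\<Sum>K1\<in>hol_supp f. \<Sum>K2\<in>hol_supp f.
       if ((\<forall>i. K1 i \<le> P i) \<and> (\<forall>i. K2 i \<le> Q i) \<and> (\<lambda>i. P i - K1 i) = (\<lambda>i. Q i - K2 i)) \<and> 1 \<le> P l - K1 l
       then f (K1, \<lambda>_. 0) * cnj (f (K2, \<lambda>_. 0)) * w (\<lambda>i. P i - K1 i - unit_idx l i) else 0)"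
proof (cases "1 \<le> P l \<and> 1 \<le> Q l")
  case True
  have "(\<lambda>i. P i - unit_idx l i - K1 i) = (\<lambda>i. P i - K1 i - unit_idx l i)" for K1 :: "'a \<Rightarrow> nat"
    by (simp add: add.commute)
  then show ?thesis
    unfolding if_P[OF True] weighted_square_apply excess_minus_unit_idx_iff[of P l Q, OF conjunct1[OF True] conjunct2[OF True]]
    by presburger
next
  case False
  have no_term: "\<not> (((\<forall>i. K1 i \<le> P i) \<and> (\<forall>i. K2 i \<le> Q i) \<and> (\<lambda>i. P i - K1 i) = (\<lambda>i. Q i - K2 i)) \<and> 1 \<le> P l - K1 l)"
    for K1 K2
  proof
    assume c: "((\<forall>i. K1 i \<le> P i) \<and> (\<forall>i. K2 i \<le> Q i) \<and> (\<lambda>i. P i - K1 i) = (\<lambda>i. Q i - K2 i)) \<and> 1 \<le> P l - K1 l"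
    then have "P l - K1 l = Q l - K2 l" by metis
    then show False using c False by linarith
  qed
  show ?thesis unfolding if_not_P[OF False] by (simp only: no_term if_False sum.neutral_const)
qed

lemma scalar_times_weighted_square:
  fixes f :: "('i::finite) cpoly"
  assumes f: "f \<in> Pkl k 0"
  shows "complex_of_real (h * real (mdeg P) - h * (real k - 1)) * weighted_square f w (P, Q)
   = (\<Sum>K1\<in>hol_supp f. \<Sum>K2\<in>hol_supp f.
       if (\<forall>i. K1 i \<le> P i) \<and> (\<forall>i. K2 i \<le> Q i) \<and> (\<lambda>i. P i - K1 i) = (\<lambda>i. Q i - K2 i)
       then complex_of_real (h * (real (mdeg (\<lambda>i. P i - K1 i)) + 1))
         * (f (K1, \<lambda>_. 0) * cnj (f (K2, \<lambda>_. 0)) * w (\<lambda>i. P i - K1 i)) else 0)"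
  unfolding weighted_square_apply sum_distrib_left
proof (intro sum.cong refl)
  fix K1 K2 assume K1: "K1 \<in> hol_supp f"
  show "complex_of_real (h * real (mdeg P) - h * (real k - 1)) *
      (if (\<forall>i. K1 i \<le> P i) \<and> (\<forall>i. K2 i \<le> Q i) \<and> (\<lambda>i. P i - K1 i) = (\<lambda>i. Q i - K2 i)
       then f (K1, \<lambda>_. 0) * cnj (f (K2, \<lambda>_. 0)) * w (\<lambda>i. P i - K1 i) else 0)
    = (if (\<forall>i. K1 i \<le> P i) \<and> (\<forall>i. K2 i \<le> Q i) \<and> (\<lambda>i. P i - K1 i) = (\<lambda>i. Q i - K2 i)
       then complex_of_real (h * (real (mdeg (\<lambda>i. P i - K1 i)) + 1))
         * (f (K1, \<lambda>_. 0) * cnj (f (K2, \<lambda>_. 0)) * w (\<lambda>i. P i - K1 i)) else 0)"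
  proof (cases "(\<forall>i. K1 i \<le> P i) \<and> (\<forall>i. K2 i \<le> Q i) \<and> (\<lambda>i. P i - K1 i) = (\<lambda>i. Q i - K2 i)")
    case True
    then have "mdeg P = k + mdeg (\<lambda>i. P i - K1 i)"
      using mdeg_diff[of K1 P] mdeg_mono[of K1 P] mdeg_hol_supp[OF f K1] by simp
    then have "h * real (mdeg P) - h * (real k - 1) = h * (real (mdeg (\<lambda>i. P i - K1 i)) + 1)"
      by (simp add: algebra_simps)
    then show ?thesis unfolding if_P[OF True] by simp
  next
    case False
    show ?thesis unfolding if_not_P[OF False] by simp
  qed
qed

lemma wick_J_minus_weighted_square:
  fixes f :: "('i::finite) cpoly"
  assumes f: "f \<in> Pkl k 0" and d: "\<And>N. w N \<noteq> 0 \<Longrightarrow> mdeg N \<le> d"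
  shows "wick h (J_minus (h * (real k - 1))) (weighted_square f w) = weighted_square f (J_action h w)"
proof (rule ext, clarify)
  fix P Q :: "'i \<Rightarrow> nat"
  let ?c = "\<lambda>K1 K2. (\<forall>i. K1 i \<le> P i) \<and> (\<forall>i. K2 i \<le> Q i) \<and> (\<lambda>i. P i - K1 i) = (\<lambda>i. Q i - K2 i)"
  let ?a = "\<lambda>K1 K2. f (K1, \<lambda>_. 0) * cnj (f (K2, \<lambda>_. 0))"
  let ?t1 = "\<lambda>K1 K2 l. if ?c K1 K2 \<and> 1 \<le> P l - K1 l then ?a K1 K2 * w (\<lambda>i. P i - K1 i - unit_idx l i) else 0"
  let ?t2 = "\<lambda>K1 K2. if ?c K1 K2 then complex_of_real (h * (real (mdeg (\<lambda>i. P i - K1 i)) + 1)) * (?a K1 K2 * w (\<lambda>i. P i - K1 i)) else 0"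
  have fin: "finite (supp (weighted_square f w))" by (rule finite_supp_weighted_square[OF f d])
  have shifted: "(if 1 \<le> P l \<and> 1 \<le> Q l then weighted_square f w (\<lambda>i. P i - unit_idx l i, \<lambda>i. Q i - unit_idx l i) else 0)
      = (\<Sum>K1\<in>hol_supp f. \<Sum>K2\<in>hol_supp f. ?t1 K1 K2 l)" for l
    by (rule weighted_square_minus_unit_idx)
  have scaled: "complex_of_real (h * real (mdeg P) - h * (real k - 1)) * weighted_square f w (P,Q) = (\<Sum>K1\<in>hol_supp f. \<Sum>K2\<in>hol_supp f. ?t2 K1 K2)"
    by (rule scalar_times_weighted_square[OF f])
  have J_action_terms: "weighted_square f (J_action h w) (P,Q) = (\<Sum>K1\<in>hol_supp f. \<Sum>K2\<in>hol_supp f. (\<Sum>l\<in>UNIV. ?t1 K1 K2 l) + ?t2 K1 K2)"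
    unfolding weighted_square_apply
  proof (intro sum.cong refl)
    fix K1 K2
    show "(if ?c K1 K2 then ?a K1 K2 * J_action h w (\<lambda>i. P i - K1 i) else 0) = (\<Sum>l\<in>UNIV. ?t1 K1 K2 l) + ?t2 K1 K2"
    proof (cases "?c K1 K2")
      case True
      show ?thesis unfolding eqTrueI[OF True] if_True simp_thms(21) J_action_def
        by (simp add: distrib_left sum_distrib_left if_distrib mult_ac cong: if_cong)
    next
      case False
      show ?thesis unfolding Eq_FalseI[OF False] if_False simp_thms(23) by simp
    qed
  qed
  have "wick h (J_minus (h * (real k - 1))) (weighted_square f w) (P,Q)
      = (\<Sum>l\<in>UNIV. \<Sum>K1\<in>hol_supp f. \<Sum>K2\<in>hol_supp f. ?t1 K1 K2 l) + (\<Sum>K1\<in>hol_supp f. \<Sum>K2\<in>hol_supp f. ?t2 K1 K2)"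
    unfolding wick_J_minus[OF fin] shifted scaled ..
  also have "(\<Sum>l\<in>UNIV. \<Sum>K1\<in>hol_supp f. \<Sum>K2\<in>hol_supp f. ?t1 K1 K2 l) = (\<Sum>K1\<in>hol_supp f. \<Sum>K2\<in>hol_supp f. \<Sum>l\<in>UNIV. ?t1 K1 K2 l)"
    by (subst sum.swap) (intro sum.cong refl sum.swap)
  finally show "wick h (J_minus (h * (real k - 1))) (weighted_square f w) (P,Q) = weighted_square f (J_action h w) (P,Q)"
    unfolding J_action_terms by (simp add: sum.distrib)
qed

definition monomial_times_conj :: "('i::finite) cpoly \<Rightarrow> real \<Rightarrow> ('i \<Rightarrow> nat) \<Rightarrow> 'i cpoly" where
  "monomial_times_conj f r L = (\<lambda>(A,B). if A = L then complex_of_real r * cnj (f (B, \<lambda>_. 0)) else 0)"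

lemma monomial_times_conj_apply: "monomial_times_conj f r L (A,B) = (if A = L then complex_of_real r * cnj (f (B, \<lambda>_. 0)) else 0)"
  by (simp add: monomial_times_conj_def)

lemma supp_monomial_times_conj: "supp (monomial_times_conj f r L) \<subseteq> (\<lambda>K. (L,K)) ` hol_supp f"
  by (auto simp: supp_def monomial_times_conj_def hol_supp_def split: if_splits)

lemma supp_cstar_monomial_times_conj: "supp (cstar (monomial_times_conj f r L)) \<subseteq> (\<lambda>K. (K,L)) ` hol_supp f"
  by (auto simp: supp_def monomial_times_conj_def hol_supp_def cstar_def split: if_splits)

lemma monomial_times_conj_in_Bset:
  fixes f :: "('i::finite) cpoly"
  assumes f: "f \<in> Pkl k 0" and L: "mdeg L = k"
  shows "monomial_times_conj f r L \<in> Bset"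
  unfolding Bset_def
proof (intro CollectI conjI allI impI)
  show "finite (supp (monomial_times_conj f r L))"
    by (rule finite_subset[OF supp_monomial_times_conj]) (simp add: finite_hol_supp[OF f])
  fix A B assume "monomial_times_conj f r L (A,B) \<noteq> 0"
  then have "A = L" "B \<in> hol_supp f" by (auto simp: monomial_times_conj_apply hol_supp_def split: if_splits)
  then show "mdeg A = mdeg B" using mdeg_hol_supp[OF f] L by simp
qed

lemma contraction_eq_iff:
  fixes M L K1 K2 P Q :: "'i \<Rightarrow> nat"
  assumes hML: "\<forall>i. M i \<le> L i"
  shows "((\<lambda>i. K1 i + L i - M i) = P \<and> (\<lambda>i. L i - M i + K2 i) = Q) \<longleftrightarrow>
     (M = (\<lambda>i. L i - (P i - K1 i)) \<and> (((\<forall>i. K1 i \<le> P i) \<and> (\<forall>i. K2 i \<le> Q i) \<and> (\<lambda>i. P i - K1 i) = (\<lambda>i. Q i - K2 i)) \<and> (\<forall>i. P i - K1 i \<le> L i)))"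
proof -
  have pi: "(K1 i + L i - M i = P i \<and> L i - M i + K2 i = Q i) \<longleftrightarrow>
     (M i = L i - (P i - K1 i) \<and> K1 i \<le> P i \<and> K2 i \<le> Q i \<and> P i - K1 i = Q i - K2 i \<and> P i - K1 i \<le> L i)" for i
    using hML[rule_format, of i] by arith
  show ?thesis unfolding fun_eq_iff using pi by blast
qed

lemma sum_contractions_single:
  fixes L K1 K2 P Q :: "'i::finite \<Rightarrow> nat"
  shows "(\<Sum>M\<in>{M. \<forall>i. M i \<le> L i \<and> M i \<le> L i}. if (\<lambda>i. K1 i + L i - M i) = P \<and> (\<lambda>i. L i - M i + K2 i) = Q then G M else 0)
   = (if ((\<forall>i. K1 i \<le> P i) \<and> (\<forall>i. K2 i \<le> Q i) \<and> (\<lambda>i. P i - K1 i) = (\<lambda>i. Q i - K2 i)) \<and> (\<forall>i. P i - K1 i \<le> L i)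
      then G (\<lambda>i. L i - (P i - K1 i)) else (0::complex))"
proof -
  let ?M0 = "\<lambda>i. L i - (P i - K1 i)"
  let ?s = "((\<forall>i. K1 i \<le> P i) \<and> (\<forall>i. K2 i \<le> Q i) \<and> (\<lambda>i. P i - K1 i) = (\<lambda>i. Q i - K2 i)) \<and> (\<forall>i. P i - K1 i \<le> L i)"
  have fin: "finite {M::'i\<Rightarrow>nat. \<forall>i. M i \<le> L i \<and> M i \<le> L i}"
    by (rule finite_subset[OF _ finite_mdeg_le[of "mdeg L"]]) (auto intro: mdeg_mono)
  have "(\<Sum>M\<in>{M. \<forall>i. M i \<le> L i \<and> M i \<le> L i}. if (\<lambda>i. K1 i + L i - M i) = P \<and> (\<lambda>i. L i - M i + K2 i) = Q then G M else 0)
      = (\<Sum>M\<in>{M. \<forall>i. M i \<le> L i \<and> M i \<le> L i}. if M = ?M0 then (if ?s then G M else 0) else 0)"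
  proof (rule sum.cong[OF refl])
    fix M assume "M \<in> {M::'i\<Rightarrow>nat. \<forall>i. M i \<le> L i \<and> M i \<le> L i}"
    then have "\<forall>i. M i \<le> L i" by simp
    from contraction_eq_iff[OF this, of K1 P K2 Q] show "(if (\<lambda>i. K1 i + L i - M i) = P \<and> (\<lambda>i. L i - M i + K2 i) = Q then G M else 0)
      = (if M = ?M0 then (if ?s then G M else 0) else 0)" by simp
  qed
  also have "\<dots> = (if ?s then G ?M0 else 0)"
    using fin by (simp add: sum.delta)
  finally show ?thesis .
qed

definition square_weight :: "real \<Rightarrow> real \<Rightarrow> ('i::finite \<Rightarrow> nat) \<Rightarrow> ('i \<Rightarrow> nat) \<Rightarrow> complex" where
  "square_weight h r L N = (if \<forall>i. N i \<le> L i then complex_of_real (r^2 * h ^ mdeg (\<lambda>i. L i - N i)) / of_nat (mfact (\<lambda>i. L i - N i))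
      * (\<Prod>i\<in>UNIV. of_nat (fact (L i)) / of_nat (fact (N i)))^2 else 0)"

lemma wick_term_cstar_monomial_times_conj:
  "wick_term h (cstar (monomial_times_conj f r L)) (monomial_times_conj f r L) P Q (K1, L) (L, K2)
   = (if (\<forall>i. K1 i \<le> P i) \<and> (\<forall>i. K2 i \<le> Q i) \<and> (\<lambda>i. P i - K1 i) = (\<lambda>i. Q i - K2 i)
      then f (K1, \<lambda>_. 0) * cnj (f (K2, \<lambda>_. 0)) * square_weight h r L (\<lambda>i. P i - K1 i) else 0)"
proof -
  let ?g = "monomial_times_conj f r L"
  let ?G = "\<lambda>M. complex_of_real (h ^ mdeg M) / of_nat (mfact M)
           * (\<Prod>i\<in>UNIV. of_nat (fact (L i)) / of_nat (fact (L i - M i)))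
           * (\<Prod>i\<in>UNIV. of_nat (fact (L i)) / of_nat (fact (L i - M i)))
           * (complex_of_real r * f (K1, \<lambda>_. 0)) * (complex_of_real r * cnj (f (K2, \<lambda>_. 0)))"
  have "wick_term h (cstar ?g) ?g P Q (K1, L) (L, K2) = (\<Sum>M\<in>{M. \<forall>i. M i \<le> L i \<and> M i \<le> L i}.
      if (\<lambda>i. K1 i + L i - M i) = P \<and> (\<lambda>i. L i - M i + K2 i) = Q then ?G M else 0)"
    unfolding wick_term_def by (simp add: cstar_apply monomial_times_conj_apply cong: if_cong)
  also have "\<dots> = (if ((\<forall>i. K1 i \<le> P i) \<and> (\<forall>i. K2 i \<le> Q i) \<and> (\<lambda>i. P i - K1 i) = (\<lambda>i. Q i - K2 i))
      \<and> (\<forall>i. P i - K1 i \<le> L i) then ?G (\<lambda>i. L i - (P i - K1 i)) else 0)"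
    by (rule sum_contractions_single)
  also have "\<dots> = (if (\<forall>i. K1 i \<le> P i) \<and> (\<forall>i. K2 i \<le> Q i) \<and> (\<lambda>i. P i - K1 i) = (\<lambda>i. Q i - K2 i)
      then f (K1, \<lambda>_. 0) * cnj (f (K2, \<lambda>_. 0)) * square_weight h r L (\<lambda>i. P i - K1 i) else 0)"
  proof (cases "(\<forall>i. K1 i \<le> P i) \<and> (\<forall>i. K2 i \<le> Q i) \<and> (\<lambda>i. P i - K1 i) = (\<lambda>i. Q i - K2 i)")
    case c: True
    show ?thesis
    proof (cases "\<forall>i. P i - K1 i \<le> L i")
      case True
      have "L i - (L i - (P i - K1 i)) = P i - K1 i" for i using True by simp
      then show ?thesis unfolding eqTrueI[OF c] eqTrueI[OF True] if_True simp_thms(21) square_weight_def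
        by (simp add: power2_eq_square algebra_simps of_real_mult)
    next
      case False
      show ?thesis
        unfolding eqTrueI[OF c] Eq_FalseI[OF False] if_True if_False simp_thms(21) square_weight_def by simp
    qed
  next
    case False
    show ?thesis unfolding Eq_FalseI[OF False] if_False simp_thms(23) by simp
  qed
  finally show ?thesis .
qed

lemma wick_cstar_monomial_times_conj:
  fixes f :: "('i::finite) cpoly"
  assumes f: "f \<in> Pkl k 0"
  shows "wick h (cstar (monomial_times_conj f r L)) (monomial_times_conj f r L) = weighted_square f (square_weight h r L)"
proof (rule ext, clarify)
  fix P Q :: "'i \<Rightarrow> nat"
  let ?g = "monomial_times_conj f r L"
  have inj1: "inj_on (\<lambda>K. (K, L)) A" for A by (auto simp: inj_on_def)
  have inj2: "inj_on (\<lambda>K. (L, K)) A" for A by (auto simp: inj_on_def)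
  have "wick h (cstar ?g) ?g (P, Q) = (\<Sum>a\<in>(\<lambda>K. (K, L)) ` hol_supp f. \<Sum>b\<in>(\<lambda>K. (L, K)) ` hol_supp f.
      wick_term h (cstar ?g) ?g P Q a b)"
    by (rule wick_eq_sum_superset) (simp_all add: finite_hol_supp[OF f] supp_monomial_times_conj supp_cstar_monomial_times_conj)
  also have "\<dots> = (\<Sum>K1\<in>hol_supp f. \<Sum>K2\<in>hol_supp f. wick_term h (cstar ?g) ?g P Q (K1, L) (L, K2))"
    by (simp add: sum.reindex[OF inj1] sum.reindex[OF inj2])
  finally show "wick h (cstar ?g) ?g (P, Q) = weighted_square f (square_weight h r L) (P, Q)"
    unfolding wick_term_cstar_monomial_times_conj weighted_square_apply .
qed

lemma sum_wick_squares_in_pos_cone: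
  assumes "finite I" "\<And>x. x \<in> I \<Longrightarrow> g x \<in> Bset"
  shows "(\<lambda>m. \<Sum>x\<in>I. wick h (cstar (g x)) (g x) m) \<in> pos_cone h"
  using assms
proof (induction I rule: finite_induct)
  case empty
  show ?case using pos_cone.pc_zero by simp
next
  case (insert x F)
  have "(\<lambda>m. (\<lambda>m. \<Sum>x\<in>F. wick h (cstar (g x)) (g x) m) m + wick h (cstar (g x)) (g x) m) \<in> pos_cone h"
    by (rule pos_cone.pc_step) (use insert in auto)
  then show ?case using insert(1,2) by (simp add: add.commute)
qed

lemma square_weight_eq:
  fixes L N :: "'i::finite \<Rightarrow> nat"
  assumes c: "c > 0" and L: "mdeg L = k"
  shows "square_weight h (sqrt (1 / (c * real (mfact L)))) L N = complex_of_real (if \<forall>i. N i \<le> L i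
       then h^(k - mdeg N) / (c * real (mfact N)) * (\<Prod>i\<in>UNIV. real (L i choose N i)) else 0)"
proof (cases "\<forall>i. N i \<le> L i")
  case True
  let ?r = "sqrt (1 / (c * real (mfact L)))"
  have mL: "0 < real (mfact L)" "0 < real (mfact N)" "0 < real (mfact (\<lambda>i. L i - N i))"
    using mfact_pos by auto
  have r2: "?r^2 = 1 / (c * real (mfact L))" using c mL by simp
  have P: "(\<Prod>i\<in>UNIV. of_nat (fact (L i)) / of_nat (fact (N i)) :: complex)
      = complex_of_real (real (mfact L) / real (mfact N))"
    by (simp add: mfact_def prod_dividef of_nat_prod)
  have le: "\<And>i. N i \<le> L i" using True by simp
  have md: "mdeg (\<lambda>i. L i - N i) = k - mdeg N" using mdeg_diff[of N L, OF le] L by simp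
  have "square_weight h ?r L N = complex_of_real (?r^2 * h ^ (k - mdeg N) / real (mfact (\<lambda>i. L i - N i))
      * (real (mfact L) / real (mfact N))^2)"
    unfolding square_weight_def if_P[OF True] P md by simp
  also have "?r^2 * h ^ (k - mdeg N) / real (mfact (\<lambda>i. L i - N i)) * (real (mfact L) / real (mfact N))^2
     = h^(k - mdeg N) / (c * real (mfact N)) * (\<Prod>i\<in>UNIV. real (L i choose N i))"
    unfolding r2 using mL c mfact_eq_mult_binomial[of N L, OF le]
    by (simp add: field_simps power2_eq_square)
  finally show ?thesis using True by simp
next
  case False
  show ?thesis unfolding square_weight_def if_not_P[OF False] by simp
qed

lemma sum_square_weight_eq:
  fixes N :: "'i::finite \<Rightarrow> nat"
  assumes c: "c > 0"
  shows "(\<Sum>L\<in>{L. mdeg L = k}. square_weight h (sqrt (1 / (c * real (mfact L)))) L N)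
    = complex_of_real (if mdeg N \<le> k then h^(k - mdeg N) * real ((k + card (UNIV::'i set) - 1) choose (k - mdeg N)) / (c * real (mfact N)) else 0)"
proof -
  have fin: "finite {L::'i \<Rightarrow> nat. mdeg L = k}" by (rule finite_subset[OF _ finite_mdeg_le[of k]]) auto
  have "(\<Sum>L\<in>{L. mdeg L = k}. square_weight h (sqrt (1 / (c * real (mfact L)))) L N)
     = complex_of_real (\<Sum>L\<in>{L. mdeg L = k}. if \<forall>i. N i \<le> L i
       then h^(k - mdeg N) / (c * real (mfact N)) * (\<Prod>i\<in>UNIV. real (L i choose N i)) else 0)"
    unfolding of_real_sum by (intro sum.cong refl square_weight_eq[OF c]) simp
  also have "(\<Sum>L\<in>{L. mdeg L = k}. if \<forall>i. N i \<le> L i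
       then h^(k - mdeg N) / (c * real (mfact N)) * (\<Prod>i\<in>UNIV. real (L i choose N i)) else 0)
     = h^(k - mdeg N) / (c * real (mfact N)) * (\<Sum>L\<in>{L. mdeg L = k \<and> (\<forall>i. N i \<le> L i)}. \<Prod>i\<in>UNIV. real (L i choose N i))"
  proof -
    have e: "{L. mdeg L = k \<and> (\<forall>i. N i \<le> L i)} = {L \<in> {L. mdeg L = k}. \<forall>i. N i \<le> L i}" by auto
    show ?thesis unfolding e sum.inter_filter[OF fin] sum_distrib_left
      by (intro sum.cong refl) simp
  qed
  also have "\<dots> = (if mdeg N \<le> k then h^(k - mdeg N) * real ((k + card (UNIV::'i set) - 1) choose (k - mdeg N)) / (c * real (mfact N)) else 0)"
  proof (cases "mdeg N \<le> k")
    case False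
    have "mdeg N \<le> mdeg L" if "\<forall>i. N i \<le> L i" for L using that by (intro mdeg_mono) auto
    then have empty: "{L. mdeg L = k \<and> (\<forall>i. N i \<le> L i)} = {}" using False by auto
    show ?thesis unfolding empty using False by simp
  qed (simp add: sum_mdeg_eq_prod_binomial)
  finally show ?thesis .
qed

section \<open>Radial weights\<close>

(* radial \<phi> is the weight of \<Sum>j \<phi>(j) |z|^(2j) / j!, by the multinomial theorem. *)

definition radial :: "(nat \<Rightarrow> real) \<Rightarrow> ('i::finite \<Rightarrow> nat) \<Rightarrow> complex" where
  "radial \<phi> N = complex_of_real (\<phi> (mdeg N) / real (mfact N))"

lemma sum_square_weight_eq_radial:
  fixes c :: real
  assumes "c > 0"
  shows "(\<lambda>N. \<Sum>L\<in>{L::'i::finite \<Rightarrow> nat. mdeg L = k}. square_weight h (sqrt (1 / (c * real (mfact L)))) L N)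
    = radial (\<lambda>j. if j \<le> k then h^(k - j) * real ((k + card (UNIV::'i set) - 1) choose (k - j)) / c else 0)"
  unfolding sum_square_weight_eq[OF assms] radial_def by (auto simp: fun_eq_iff)

lemma delta_zero_eq_radial: "delta_zero = radial (\<lambda>j. if j = 0 then 1 else 0)"
proof
  fix N :: "'i::finite \<Rightarrow> nat"
  show "delta_zero N = radial (\<lambda>j. if j = 0 then 1 else 0) N"
    by (cases "N = (\<lambda>_. 0)") (simp_all add: delta_zero_def radial_def mdeg_eq_0_iff)
qed

lemma cstar_weighted_square_radial: "cstar (weighted_square f (radial \<phi>)) = weighted_square f (radial \<phi>)"
proof -
  have "cnj (radial \<phi> N) = radial \<phi> N" for N :: "'a \<Rightarrow> nat" by (simp add: radial_def)
  then show ?thesis unfolding cstar_weighted_square by simp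
qed

lemma J_action_radial:
  "J_action h (radial v) = radial (\<lambda>j. real j * v (j - 1) + h * (real j + 1) * v j)"
proof
  fix N :: "'i::finite \<Rightarrow> nat"
  have "(if 1 \<le> N l then radial v (\<lambda>i. N i - unit_idx l i) else 0)
      = complex_of_real (real (N l) * v (mdeg N - 1) / real (mfact N))" for l
  proof (cases "1 \<le> N l")
    case True
    have "0 < real (mfact (\<lambda>i. N i - unit_idx l i))" using mfact_pos by simp
    then show ?thesis
      unfolding if_P[OF True] radial_def mdeg_minus_unit_idx[of N l, OF True] mfact_minus_unit_idx[of N l, OF True]
      using True by (simp add: field_simps)
  qed simp
  then have "(\<Sum>l\<in>UNIV. if 1 \<le> N l then radial v (\<lambda>i. N i - unit_idx l i) else 0)
      = complex_of_real (real (mdeg N) * v (mdeg N - 1) / real (mfact N))"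
    unfolding of_real_sum[symmetric]
    by (simp add: mdeg_def sum_divide_distrib[symmetric] sum_distrib_right[symmetric])
  then show "J_action h (radial v) N = radial (\<lambda>j. real j * v (j - 1) + h * (real j + 1) * v j) N"
    unfolding J_action_def by (simp add: radial_def add_divide_distrib)
qed

lemma weighted_square_radial_in_pos_cone:
  fixes f :: "('i::finite) cpoly"
  assumes f: "f \<in> Pkl k 0" and c: "c > 0"
  shows "weighted_square f (radial (\<lambda>j. if j \<le> k
           then h^(k - j) * real ((k + card (UNIV::'i set) - 1) choose (k - j)) / c else 0)) \<in> herm (pos_cone h)"
proof -
  define g where "g L = monomial_times_conj f (sqrt (1 / (c * real (mfact L)))) L" for L
  have "finite {L::'i \<Rightarrow> nat. mdeg L = k}"
    by (rule finite_subset[OF _ finite_mdeg_le[of k]]) auto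
  moreover have "(\<lambda>m. \<Sum>L | mdeg L = k. wick h (cstar (g L)) (g L) m)
     = weighted_square f (\<lambda>N. \<Sum>L | mdeg L = k. square_weight h (sqrt (1 / (c * real (mfact L)))) L N)"
    using calculation by (simp add: fun_eq_iff g_def wick_cstar_monomial_times_conj[OF f] weighted_square_sum)
  ultimately have "weighted_square f (radial (\<lambda>j. if j \<le> k
      then h^(k - j) * real ((k + card (UNIV::'i set) - 1) choose (k - j)) / c else 0)) \<in> pos_cone h"
    using sum_wick_squares_in_pos_cone[of "{L. mdeg L = k}" g h]
    by (simp add: g_def monomial_times_conj_in_Bset[OF f] sum_square_weight_eq_radial[OF c])
  then show ?thesis unfolding herm_def by (simp add: cstar_weighted_square_radial)
qed

lemma weighted_square_J_action_in_ideal: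
  fixes f :: "('i::finite) cpoly"
  assumes f: "f \<in> Pkl k 0" and d: "\<And>N. w N \<noteq> 0 \<Longrightarrow> mdeg N \<le> d"
  shows "weighted_square f (J_action h w) \<in> star_ideal h (J_minus (h * (real k - 1)))"
proof -
  have "weighted_square f w \<in> Bset"
    by (rule weighted_square_in_Bset[OF f]) (fact d)
  then have "wick h (J_minus (h * (real k - 1))) (weighted_square f w) \<in> star_ideal h (J_minus (h * (real k - 1)))"
    by (rule star_ideal.si_right[OF _ star_ideal.si_gen])
  moreover have "wick h (J_minus (h * (real k - 1))) (weighted_square f w) = weighted_square f (J_action h w)"
    by (rule wick_J_minus_weighted_square[OF f]) (fact d)
  ultimately show ?thesis by simp
qed

lemma weighted_square_radial_in_ideal:
  fixes f :: "('i::finite) cpoly"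
  assumes f: "f \<in> Pkl k 0" and v: "\<And>j. k \<le> j \<Longrightarrow> v j = 0"
  shows "weighted_square f (radial (\<lambda>j. real j * v (j - 1) + h * (real j + 1) * v j))
    \<in> herm (star_ideal h (J_minus (h * (real k - 1))))"
proof -
  have "radial v N = 0" if "\<not> mdeg N \<le> k" for N :: "'i \<Rightarrow> nat"
    using that v by (simp add: radial_def)
  then have "weighted_square f (J_action h (radial v)) \<in> star_ideal h (J_minus (h * (real k - 1)))"
    by (intro weighted_square_J_action_in_ideal[OF f]) blast
  then show ?thesis unfolding herm_def J_action_radial by (simp add: cstar_weighted_square_radial)
qed

lemma pmult_cstar_eq_radial_sum:
  fixes f :: "('i::finite) cpoly"
  assumes "f \<in> Pkl k 0"
  shows "pmult f (cstar f)
    = (\<lambda>m. weighted_square f (radial \<gamma>) m + weighted_square f (radial (\<lambda>j. (if j = 0 then 1 else 0) - \<gamma> j)) m)"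
proof -
  have split: "delta_zero = (\<lambda>N. radial \<gamma> N + radial (\<lambda>j. (if j = 0 then 1 else 0) - \<gamma> j) N)"
    by (simp add: fun_eq_iff delta_zero_eq_radial radial_def add_divide_distrib[symmetric])
  show ?thesis
    unfolding pmult_cstar_eq_weighted_square[OF assms] split by (intro ext) (rule weighted_square_add)
qed

lemma recursion_solution:
  fixes h :: real and d :: "nat \<Rightarrow> real"
  assumes h: "h > 0"
  defines "y \<equiv> \<lambda>j. \<Sum>i\<le>j. (-h)^i * d i"
  defines "v \<equiv> \<lambda>j. (-1)^j * y j / (h^(j+1) * (real j + 1))"
  shows "real j * v (j - 1) + h * (real j + 1) * v j = d j"
proof (cases j)
  case 0
  have "h * v 0 = y 0" unfolding v_def using h by simp
  then show ?thesis using 0 by (simp add: y_def)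
next
  case (Suc m)
  have yS: "y j - y m = (-h)^j * d j" unfolding Suc y_def by simp
  have hp: "h^j \<noteq> 0" "h^(m+1) \<noteq> 0" using h by simp_all
  have cancel: "a \<noteq> 0 \<Longrightarrow> H \<noteq> 0 \<Longrightarrow> a * (X / (H * a)) = X / H" for a H X :: real
    by (simp add: field_simps)
  have "real j * v (j - 1) = (real m + 1) * ((-1)^m * y m / (h^(m+1) * (real m + 1)))"
    unfolding Suc v_def diff_Suc_1 of_nat_Suc by (simp only: add.commute)
  also have "\<dots> = (-1)^m * y m / h^(m+1)"
    by (rule cancel) (use hp in simp_all)
  also have "\<dots> = - ((-1)^j * y m / h^j)" by (simp add: Suc)
  finally have A: "real j * v (j - 1) = - ((-1)^j * y m / h^j)" .
  have "(real j + 1) * ((-1)^j * y j / (h^(j+1) * (real j + 1))) = (-1)^j * y j / h^(j+1)"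
    by (rule cancel) (use h in simp_all)
  moreover have "h * ((-1)^j * y j / h^(j+1)) = (-1)^j * y j / h^j"
    using hp by (simp add: field_simps)
  ultimately have B: "h * (real j + 1) * v j = (-1)^j * y j / h^j"
    unfolding v_def by (simp only: mult.assoc)
  have C: "(-1::real)^j * (-h)^j = h^j" by (simp add: power_mult_distrib[symmetric])
  have "real j * v (j - 1) + h * (real j + 1) * v j = (-1)^j * (y j - y m) / h^j"
    unfolding A B by (simp add: diff_divide_distrib right_diff_distrib)
  also have "\<dots> = ((-1)^j * (-h)^j) * d j / h^j" unfolding yS by (simp only: mult.assoc)
  also have "\<dots> = d j" unfolding C using hp by simp
  finally show ?thesis .
qed

(* The solution obtained by unrolling the recursion from j = 0 stops at degree k exactly
   when the alternating moment of d vanishes. *)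

lemma terminating_recursion_solution:
  fixes h :: real and d :: "nat \<Rightarrow> real"
  assumes h: "h > 0" and moment: "(\<Sum>i\<le>k. (-h)^i * d i) = 0" and "\<And>j. k < j \<Longrightarrow> d j = 0"
  obtains v where "\<And>j. real j * v (j - 1) + h * (real j + 1) * v j = d j" and "\<And>j. k \<le> j \<Longrightarrow> v j = 0"
proof
  define y where "y j = (\<Sum>i\<le>j. (-h)^i * d i)" for j
  define v where "v j = (-1)^j * y j / (h^(j+1) * (real j + 1))" for j
  show "real j * v (j - 1) + h * (real j + 1) * v j = d j" for j
    unfolding v_def y_def by (rule recursion_solution[OF h])
  fix j assume "k \<le> j"
  then have "y j = (\<Sum>i\<le>k. (-h)^i * d i)"
    unfolding y_def by (intro sum.mono_neutral_right) (auto simp: assms(3))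
  then show "v j = 0" by (simp add: v_def moment)
qed

section \<open>The decomposition\<close>

lemma normalized_alternating_moment:
  fixes h c :: real and \<beta> :: "nat \<Rightarrow> real"
  assumes "c = h^k * (\<Sum>j\<le>k. (-1)^j * \<beta> j)" and "c \<noteq> 0"
  shows "(\<Sum>i\<le>k. (-h)^i * (h^(k - i) * \<beta> i / c)) = 1"
proof -
  have "(-h)^i * (h^(k - i) * \<beta> i / c) = h^k * ((-1)^i * \<beta> i) / c" if "i \<le> k" for i
  proof -
    have "(-h)^i * h^(k - i) = (-1)^i * h^k"
      using that by (simp add: power_minus[of h i] mult.assoc power_add[symmetric])
    then show ?thesis by (simp add: field_simps)
  qed
  then have "(\<Sum>i\<le>k. (-h)^i * (h^(k - i) * \<beta> i / c)) = (\<Sum>i\<le>k. h^k * ((-1)^i * \<beta> i)) / c"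
    unfolding sum_divide_distrib by (intro sum.cong) auto
  also have "\<dots> = 1" using assms unfolding sum_distrib_left by simp
  finally show ?thesis .
qed

lemma square_decomposition_several_variables:
  fixes h :: real and f :: "('i::finite) cpoly"
  assumes h: "h > 0" and f: "f \<in> Pkl k 0" and kn: "k = 0 \<or> 2 \<le> card (UNIV::'i set)"
  obtains p q where "p \<in> herm (pos_cone h)" and "q \<in> herm (star_ideal h (J_minus (h * (real k - 1))))"
    and "pmult f (cstar f) = (\<lambda>m. p m + q m)"
proof -
  define \<beta> where "\<beta> j = real ((k + card (UNIV::'i set) - 1) choose (k - j))" for j
  define c where "c = h^k * (\<Sum>j\<le>k. (-1)^j * \<beta> j)"
  have c: "c > 0"
    using alternating_sum_binomial_pos[OF kn] h unfolding c_def \<beta>_def by simp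
  define \<gamma> where "\<gamma> j = (if j \<le> k then h^(k - j) * \<beta> j / c else 0)" for j
  have "(\<Sum>i\<le>k. (-h)^i * \<gamma> i) = (\<Sum>i\<le>k. (-h)^i * (h^(k - i) * \<beta> i / c))"
    by (intro sum.cong) (auto simp: \<gamma>_def)
  also have "\<dots> = 1" by (rule normalized_alternating_moment[OF c_def]) (use c in simp)
  finally have "(\<Sum>i\<le>k. (-h)^i * ((if i = 0 then 1 else 0) - \<gamma> i)) = 0"
    by (simp add: right_diff_distrib sum_subtractf if_distrib[of "\<lambda>x. _ * x"] sum.If_cases)
  moreover have "(if j = 0 then 1 else 0) - \<gamma> j = 0" if "k < j" for j using that by (simp add: \<gamma>_def)
  ultimately obtain v where rec: "\<And>j. real j * v (j - 1) + h * (real j + 1) * v j = (if j = 0 then 1 else 0) - \<gamma> j"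
    and v_vanish: "\<And>j. k \<le> j \<Longrightarrow> v j = 0"
    using terminating_recursion_solution[OF h, where d="\<lambda>j. (if j = 0 then 1 else 0) - \<gamma> j"] by blast
  show thesis
  proof (rule that)
    show "weighted_square f (radial \<gamma>) \<in> herm (pos_cone h)"
      unfolding \<gamma>_def \<beta>_def by (rule weighted_square_radial_in_pos_cone[OF f c])
    show "weighted_square f (radial (\<lambda>j. (if j = 0 then 1 else 0) - \<gamma> j))
        \<in> herm (star_ideal h (J_minus (h * (real k - 1))))"
    proof -
      have "weighted_square f (radial (\<lambda>j. real j * v (j - 1) + h * (real j + 1) * v j))
          \<in> herm (star_ideal h (J_minus (h * (real k - 1))))"
        by (rule weighted_square_radial_in_ideal[OF f]) (fact v_vanish)
      then show ?thesis by (simp only: rec)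
    qed
  qed (rule pmult_cstar_eq_radial_sum[OF f])
qed

(* The coefficients of f conj(f) with every exponent lowered by one; in one variable this is
   f conj(f) / |z|^2. *)

definition lowered_square :: "('i::finite) cpoly \<Rightarrow> 'i cpoly" where
  "lowered_square f = (\<lambda>(A, B). f ((\<lambda>i. A i + 1), \<lambda>_. 0) * cnj (f ((\<lambda>i. B i + 1), \<lambda>_. 0)))"

lemma lowered_square_nonzero:
  "lowered_square f (A, B) \<noteq> 0 \<Longrightarrow> (\<lambda>i. A i + 1) \<in> hol_supp f \<and> (\<lambda>i. B i + 1) \<in> hol_supp f"
  by (auto simp: lowered_square_def hol_supp_def)

lemma lowered_square_in_Bset:
  fixes f :: "('i::finite) cpoly"
  assumes f: "f \<in> Pkl k 0"
  shows "lowered_square f \<in> Bset"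
  unfolding Bset_def
proof (intro CollectI conjI allI impI)
  have "supp (lowered_square f) \<subseteq> (\<lambda>(K1, K2). ((\<lambda>i. K1 i - 1), (\<lambda>i. K2 i - 1))) ` (hol_supp f \<times> hol_supp f)"
  proof
    fix m assume "m \<in> supp (lowered_square f)"
    then obtain A B where m: "m = (A, B)" "lowered_square f (A, B) \<noteq> 0" by (cases m) (auto simp: supp_def)
    show "m \<in> (\<lambda>(K1, K2). ((\<lambda>i. K1 i - 1), (\<lambda>i. K2 i - 1))) ` (hol_supp f \<times> hol_supp f)"
      by (rule rev_image_eqI[of "((\<lambda>i. A i + 1), (\<lambda>i. B i + 1))"]) (use lowered_square_nonzero[OF m(2)] m in auto)
  qed
  then show "finite (supp (lowered_square f))"
    by (rule finite_subset) (simp add: finite_hol_supp[OF f])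
  fix A B assume "lowered_square f (A, B) \<noteq> 0"
  then have "mdeg (\<lambda>i. A i + 1) = mdeg (\<lambda>i. B i + 1)"
    using lowered_square_nonzero mdeg_hol_supp[OF f] by metis
  then show "mdeg A = mdeg B"
    using mdeg_add[of A "\<lambda>_. 1"] mdeg_add[of B "\<lambda>_. 1"] by (metis add_right_cancel)
qed

(* In one variable the Euler term h(k - 1) of the Wick product cancels the scalar. *)

lemma wick_J_minus_lowered_square:
  fixes h :: real and f :: "('i::finite) cpoly"
  assumes f: "f \<in> Pkl k 0" and k: "1 \<le> k" and one: "card (UNIV::'i set) = 1"
  shows "wick h (J_minus (h * (real k - 1))) (lowered_square f) = pmult f (cstar f)"
proof (rule ext, clarify)
  fix P Q :: "'i \<Rightarrow> nat"
  obtain i0 :: 'i where U: "UNIV = {i0}" using one card_1_singletonE by blast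
  have "i = i0" for i using U by auto
  then have fun_eq_at: "(A::'i \<Rightarrow> nat) = B \<longleftrightarrow> A i0 = B i0" for A B
    by (metis ext)
  have mdeg_eq: "mdeg (K::'i \<Rightarrow> nat) = K i0" for K unfolding mdeg_def U by simp
  have "(\<Sum>l\<in>UNIV. if 1 \<le> P l \<and> 1 \<le> Q l
      then lowered_square f (\<lambda>i. P i - unit_idx l i, \<lambda>i. Q i - unit_idx l i) else 0)
      = f (P, \<lambda>_. 0) * cnj (f (Q, \<lambda>_. 0))"
  proof (cases "1 \<le> P i0 \<and> 1 \<le> Q i0")
    case True
    then have "(\<lambda>i. P i - unit_idx i0 i + 1) = P" "(\<lambda>i. Q i - unit_idx i0 i + 1) = Q"
      using U by (simp_all add: fun_eq_at unit_idx_def)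
    then show ?thesis using True by (simp add: U lowered_square_def)
  next
    case False
    have "f (P, \<lambda>_. 0) = 0 \<or> f (Q, \<lambda>_. 0) = 0"
    proof (rule ccontr)
      assume "\<not> (f (P, \<lambda>_. 0) = 0 \<or> f (Q, \<lambda>_. 0) = 0)"
      then have "mdeg P = k" "mdeg Q = k" using Pkl_k0_nonzero(2)[OF f] by blast+
      then show False using False k unfolding mdeg_eq by simp
    qed
    then show ?thesis using False by (auto simp: U)
  qed
  moreover have "complex_of_real (h * real (mdeg P) - h * (real k - 1)) * lowered_square f (P, Q) = 0"
  proof (cases "lowered_square f (P, Q) = 0")
    case False
    then have "mdeg (\<lambda>i. P i + 1) = k" using lowered_square_nonzero mdeg_hol_supp[OF f] by blast
    then have "real (mdeg P) = real k - 1" unfolding mdeg_eq using k by simp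
    then show ?thesis by simp
  qed simp
  ultimately show "wick h (J_minus (h * (real k - 1))) (lowered_square f) (P, Q) = pmult f (cstar f) (P, Q)"
    using lowered_square_in_Bset[OF f]
    by (simp add: Bset_def wick_J_minus pmult_cstar_Pkl_k0[OF f])
qed

lemma square_in_ideal_one_variable:
  fixes h :: real and f :: "('i::finite) cpoly"
  assumes f: "f \<in> Pkl k 0" and k: "1 \<le> k" and one: "card (UNIV::'i set) = 1"
  shows "pmult f (cstar f) \<in> herm (star_ideal h (J_minus (h * (real k - 1))))"
proof -
  have "wick h (J_minus (h * (real k - 1))) (lowered_square f) \<in> star_ideal h (J_minus (h * (real k - 1)))"
    by (rule star_ideal.si_right[OF lowered_square_in_Bset[OF f] star_ideal.si_gen])
  moreover have "cstar (pmult f (cstar f)) = pmult f (cstar f)"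
    by (simp add: fun_eq_iff cstar_apply pmult_cstar_Pkl_k0[OF f] mult.commute)
  ultimately show ?thesis unfolding herm_def wick_J_minus_lowered_square[OF assms] by simp
qed

theorem lemma5p10:
  fixes h :: real and k :: nat and f :: "('i::finite) cpoly"
  assumes "h > 0" and "f \<in> Pkl k 0"
  shows "\<exists>p q. p \<in> herm (pos_cone h)
           \<and> q \<in> herm (star_ideal h (\<lambda>m. Jpoly m - complex_of_real (h * (real k - 1)) * one_poly m))
           \<and> pmult f (cstar f) = (\<lambda>m. p m + q m)"
proof (cases "k = 0 \<or> 2 \<le> card (UNIV::'i set)")
  case True
  obtain p q where "p \<in> herm (pos_cone h)" "q \<in> herm (star_ideal h (J_minus (h * (real k - 1))))"
    and "pmult f (cstar f) = (\<lambda>m. p m + q m)"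
    by (rule square_decomposition_several_variables[OF assms True])
  then show ?thesis unfolding J_minus_def by blast
next
  case False
  moreover have "card (UNIV::'i set) > 0" by (simp add: finite_UNIV_card_ge_0)
  ultimately have "1 \<le> k" "card (UNIV::'i set) = 1" by linarith+
  then have "pmult f (cstar f) \<in> herm (star_ideal h (J_minus (h * (real k - 1))))"
    by (rule square_in_ideal_one_variable[OF assms(2)])
  moreover have "(\<lambda>_. 0) \<in> herm (pos_cone h)"
    by (simp add: herm_def pos_cone.pc_zero fun_eq_iff cstar_apply)
  ultimately show ?thesis unfolding J_minus_def by fastforce
qed

end
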